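(* In the D-RR setting under the strongly convex assumptions, suppose every $\alpha_t$ satisfies condition (SC). Then for every epoch $t$ and every $\ell\in\{0,\dots,m\}$, $$H_t^\ell\le\Big(1-\frac{\alpha_t\mu}{4}\Big)^\ell H_t^0+2\Big[\alpha_t\sigma^2_{\mathrm{shuffle}}\Big(1+\frac{240\alpha_t^2\rho_w^2L^3}{\mu(1-\rho_w^2)^2}\Big)+\frac{120\alpha_t^3\rho_w^2L^2}{\mu(1-\rho_w^2)^2}\sigma_*^2\Big]\sum_{k=0}^{\ell-1}\Big(1-\frac{\alpha_t\mu}{4}\Big)^k,$$ and, writing $\tilde H_{t+1}:=\mathbb{E}\|\bar x_{t+1}-x^*\|^2+\omega_t\,\mathbb{E}\|\mathbf{x}_{t+1}-\mathbf 1\bar x_{t+1}^\intercal\|^2$ (i.e. $\tilde H_{t+1}=H_t^m$, with weight $\omega_t$), $$\tilde H_{t+1}\le\Big(1-\frac{\alpha_t\mu}{4}\Big)^m H_t+2\Big[\alpha_t\sigma^2_{\mathrm{shuffle}}\Big(1+\frac{240\alpha_t^2\rho_w^2L^3}{\mu(1-\rho_w^2)^2}\Big)+\frac{120\alpha_t^3\rho_w^2L^2}{\mu(1-\rho_w^2)^2}\sigma_*^2\Big]\sum_{k=0}^{m-1}\Big(1-\frac{\alpha_t\mu}{4}\Big)^k .$$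
   Context: D-RR setting. Let $n,m,p\ge1$ be integers and $[k]=\{1,\dots,k\}$. For $i\in[n]$, $\ell\in[m]$ let $f_{i,\ell}:\mathbb{R}^p\to\mathbb{R}$ be differentiable; $f_i:=\frac1m\sum_{\ell=1}^m f_{i,\ell}$, $f:=\frac1n\sum_{i=1}^n f_i$. Let $W=(w_{ij})\in\mathbb{R}^{n\times n}$ be nonnegative, symmetric, with $W\mathbf 1=\mathbf 1$, compliant with an undirected connected graph on $[n]$ (for $i\ne j$, $w_{ij}>0$ iff $\{i,j\}$ is an edge); $\rho_w$ is the spectral norm of $W-\frac1n\mathbf 1\mathbf 1^\intercal$ (so $\rho_w<1$). The D-RR algorithm: given deterministic initial points $x_{i,0}\in\mathbb{R}^p$ and stepsizes $\alpha_t>0$, at each epoch $t=0,1,\dots$ each agent $i$ draws a permutation $(\pi^i_0,\dots,\pi^i_{m-1})$ of $[m]$ uniformly at random, independently across agents and epochs; sets $x^0_{i,t}=x_{i,t}$; for $\ell=0,\dots,m-1$ sets $x^{\ell+1}_{i,t}=\sum_{j=1}^n w_{ij}\big(x^\ell_{j,t}-\alpha_t\nabla f_{j,\pi^j_\ell}(x^\ell_{j,t})\big)$; sets $x_{i,t+1}=x^m_{i,t}$. Notation: $\mathbf{x}_t^\ell\in\mathbb{R}^{n\times p}$ has $i$-th row $(x^\ell_{i,t})^\intercal$, $\mathbf x_t:=\mathbf x_t^0$; $\bar x_t^\ell=\frac1n\sum_i x^\ell_{i,t}$, $\bar x_t:=\bar x_t^0$; $\mathbf 1(\bar x_t^\ell)^\intercal$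 is the $n\times p$ matrix all of whose rows equal $(\bar x_t^\ell)^\intercal$; $\|\cdot\|$ is Euclidean/Frobenius norm; $\mathbb{E}$ is expectation over all permutations. Strongly convex assumptions: each $f_{i,\ell}$ is $\mu$-strongly convex with $L$-Lipschitz gradient ($0<\mu\le L$); $x^*$ is the unique minimizer of $f$; $\sigma_*^2:=\frac{1}{mn}\sum_{i,\ell}\|\nabla f_{i,\ell}(x^* )\|^2$. For epoch $t$ define $\bar x_*^\ell:=x^*-\alpha_t\sum_{k=0}^{\ell-1}\frac1n\sum_{i=1}^n\nabla f_{i,\pi^i_k}(x^* )$ ($\ell=0,\dots,m$; so $\bar x_*^0=\bar x_*^m=x^*$), $\bar s_\ell:=\frac1n\sum_i f_{i,\pi^i_\ell}$, and $\sigma^2_{\mathrm{shuffle}}:=\max_{\ell=0,\dots,m-1}\mathbb{E}\big[\bar s_\ell(\bar x_*^\ell)-\bar s_\ell(x^* )-\langle\nabla\bar s_\ell(x^* ),\bar x_*^\ell-x^*\rangle\big]$ (it depends on $\alpha_t$). Condition (SC): $\alpha_t\le\min\Big\{\sqrt{\frac{2-\rho_w^2}{24\rho_w^2(5-\rho_w^2)}}\frac{1-\rho_w^2}{L},\ \frac{1-\rho_w^2}{2\mu},\ \frac{(1-\rho_w^2)\mu}{8\sqrt{30}L^2}\Big\}$ (first term $=+\infty$ if $\rho_w=0$). Lyapunov function: $\omega_t:=\frac{16\alpha_tL^2}{n\mu(1-\rho_w^2)}$, $H_t^\ell:=\mathbb{E}\|\bar x_t^\ell-\bar x_*^\ell\|^2+\omega_t\mathbb{E}\|\mathbf{x}_t^\ell-\mathbf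 1(\bar x_t^\ell)^\intercal\|^2$, and $H_t:=H_t^0=\mathbb{E}\|\bar x_t-x^*\|^2+\omega_t\mathbb{E}\|\mathbf x_t-\mathbf 1\bar x_t^\intercal\|^2$. *)

theory Defs
  imports "HOL-Analysis.Analysis" "HOL-Combinatorics.Permutations"
begin

text \<open>Agents are indexed by 0..n-1, local components by 0..m-1, epochs by t = 0,1,....
  A realisation of all random permutations is sigma :: nat => nat => nat => nat, where
  sigma t i is the permutation of agent i in epoch t (so pi^i_l = sigma t i l).\<close>

definition perm_set :: "nat \<Rightarrow> (nat \<Rightarrow> nat) set" where
  "perm_set m = {\<pi>. \<pi> permutes {..<m}}"

text \<open>All permutation choices of epochs 0..t (uniform, independent across agents and epochs).\<close>
definition perm_space :: "nat \<Rightarrow> nat \<Rightarrow> nat \<Rightarrow> (nat \<Rightarrow> nat \<Rightarrow> nat \<Rightarrow> nat) set" where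
  "perm_space n m t = PiE {..t} (\<lambda>_. PiE {..<n} (\<lambda>_. perm_set m))"

definition Exp :: "nat \<Rightarrow> nat \<Rightarrow> nat \<Rightarrow> ((nat \<Rightarrow> nat \<Rightarrow> nat \<Rightarrow> nat) \<Rightarrow> real) \<Rightarrow> real" where
  "Exp n m t X = (\<Sum>\<sigma>\<in>perm_space n m t. X \<sigma>) / real (card (perm_space n m t))"

definition drr_step :: "nat \<Rightarrow> (nat \<Rightarrow> nat \<Rightarrow> real) \<Rightarrow> (nat \<Rightarrow> nat \<Rightarrow> 'a::real_vector \<Rightarrow> 'a)
    \<Rightarrow> real \<Rightarrow> (nat \<Rightarrow> nat) \<Rightarrow> (nat \<Rightarrow> 'a) \<Rightarrow> (nat \<Rightarrow> 'a)" where
  "drr_step n W g a \<pi> x = (\<lambda>i. \<Sum>j<n. W i j *\<^sub>R (x j - a *\<^sub>R g j (\<pi> j) (x j)))"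

fun drr_inner :: "nat \<Rightarrow> (nat \<Rightarrow> nat \<Rightarrow> real) \<Rightarrow> (nat \<Rightarrow> nat \<Rightarrow> 'a::real_vector \<Rightarrow> 'a)
    \<Rightarrow> real \<Rightarrow> (nat \<Rightarrow> nat \<Rightarrow> nat) \<Rightarrow> nat \<Rightarrow> (nat \<Rightarrow> 'a) \<Rightarrow> (nat \<Rightarrow> 'a)" where
  "drr_inner n W g a \<sigma>t 0 x = x"
| "drr_inner n W g a \<sigma>t (Suc l) x = drr_step n W g a (\<lambda>j. \<sigma>t j l) (drr_inner n W g a \<sigma>t l x)"

fun drr_iter :: "nat \<Rightarrow> nat \<Rightarrow> (nat \<Rightarrow> nat \<Rightarrow> real) \<Rightarrow> (nat \<Rightarrow> nat \<Rightarrow> 'a::real_vector \<Rightarrow> 'a)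
    \<Rightarrow> (nat \<Rightarrow> real) \<Rightarrow> (nat \<Rightarrow> 'a) \<Rightarrow> (nat \<Rightarrow> nat \<Rightarrow> nat \<Rightarrow> nat) \<Rightarrow> nat \<Rightarrow> (nat \<Rightarrow> 'a)" where
  "drr_iter n m W g \<alpha> x0 \<sigma> 0 = x0"
| "drr_iter n m W g \<alpha> x0 \<sigma> (Suc t) = drr_inner n W g (\<alpha> t) (\<sigma> t) m (drr_iter n m W g \<alpha> x0 \<sigma> t)"

definition drr_x :: "nat \<Rightarrow> nat \<Rightarrow> (nat \<Rightarrow> nat \<Rightarrow> real) \<Rightarrow> (nat \<Rightarrow> nat \<Rightarrow> 'a::real_vector \<Rightarrow> 'a)
    \<Rightarrow> (nat \<Rightarrow> real) \<Rightarrow> (nat \<Rightarrow> 'a) \<Rightarrow> (nat \<Rightarrow> nat \<Rightarrow> nat \<Rightarrow> nat) \<Rightarrow> nat \<Rightarrow> nat \<Rightarrow> (nat \<Rightarrow> 'a)" where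
  "drr_x n m W g \<alpha> x0 \<sigma> t l = drr_inner n W g (\<alpha> t) (\<sigma> t) l (drr_iter n m W g \<alpha> x0 \<sigma> t)"

definition avg :: "nat \<Rightarrow> (nat \<Rightarrow> 'a::real_vector) \<Rightarrow> 'a" where
  "avg n x = (1 / real n) *\<^sub>R (\<Sum>i<n. x i)"

text \<open>Squared Frobenius norm of x - 1 xbar^T.\<close>
definition cons_err :: "nat \<Rightarrow> (nat \<Rightarrow> 'a::real_normed_vector) \<Rightarrow> real" where
  "cons_err n x = (\<Sum>i<n. (norm (x i - avg n x))\<^sup>2)"

definition xstar_bar :: "nat \<Rightarrow> (nat \<Rightarrow> nat \<Rightarrow> 'a::real_vector \<Rightarrow> 'a) \<Rightarrow> real
    \<Rightarrow> (nat \<Rightarrow> nat \<Rightarrow> nat) \<Rightarrow> 'a \<Rightarrow> nat \<Rightarrow> 'a" where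
  "xstar_bar n g a \<sigma>t xs l = xs - a *\<^sub>R (\<Sum>k<l. (1 / real n) *\<^sub>R (\<Sum>i<n. g i (\<sigma>t i k) xs))"

text \<open>rho_w: spectral (operator 2-) norm of W - (1/n) 1 1^T on R^n.\<close>
definition rho_w :: "nat \<Rightarrow> (nat \<Rightarrow> nat \<Rightarrow> real) \<Rightarrow> real" where
  "rho_w n W = Sup {sqrt (\<Sum>i<n. (\<Sum>j<n. (W i j - 1 / real n) * v j)\<^sup>2) | v. (\<Sum>j<n. (v j)\<^sup>2) \<le> 1}"

definition sigma_star_sq :: "nat \<Rightarrow> nat \<Rightarrow> (nat \<Rightarrow> nat \<Rightarrow> 'a::real_normed_vector \<Rightarrow> 'a) \<Rightarrow> 'a \<Rightarrow> real" where
  "sigma_star_sq n m g xs = (\<Sum>i<n. \<Sum>l<m. (norm (g i l xs))\<^sup>2) / (real m * real n)"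

definition sigma_shuffle_sq :: "nat \<Rightarrow> nat \<Rightarrow> (nat \<Rightarrow> nat \<Rightarrow> 'a::real_inner \<Rightarrow> real)
    \<Rightarrow> (nat \<Rightarrow> nat \<Rightarrow> 'a \<Rightarrow> 'a) \<Rightarrow> real \<Rightarrow> 'a \<Rightarrow> nat \<Rightarrow> real" where
  "sigma_shuffle_sq n m f g a xs t =
     Max ((\<lambda>l. Exp n m t (\<lambda>\<sigma>.
        let sbar = (\<lambda>y. (1 / real n) * (\<Sum>i<n. f i (\<sigma> t i l) y));
            gsbar = (1 / real n) *\<^sub>R (\<Sum>i<n. g i (\<sigma> t i l) xs);
            y = xstar_bar n g a (\<sigma> t) xs l
        in sbar y - sbar xs - inner gsbar (y - xs))) ` {..<m})"

definition omega :: "nat \<Rightarrow> real \<Rightarrow> real \<Rightarrow> real \<Rightarrow> real \<Rightarrow> real" where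
  "omega n L \<mu> \<rho> a = 16 * a * L\<^sup>2 / (real n * \<mu> * (1 - \<rho>\<^sup>2))"

definition drr_H :: "nat \<Rightarrow> nat \<Rightarrow> (nat \<Rightarrow> nat \<Rightarrow> real) \<Rightarrow> (nat \<Rightarrow> nat \<Rightarrow> 'a::real_normed_vector \<Rightarrow> 'a)
    \<Rightarrow> (nat \<Rightarrow> real) \<Rightarrow> (nat \<Rightarrow> 'a) \<Rightarrow> 'a \<Rightarrow> real \<Rightarrow> real \<Rightarrow> nat \<Rightarrow> nat \<Rightarrow> real" where
  "drr_H n m W g \<alpha> x0 xs L \<mu> t l =
     Exp n m t (\<lambda>\<sigma>. (norm (avg n (drr_x n m W g \<alpha> x0 \<sigma> t l) - xstar_bar n g (\<alpha> t) (\<sigma> t) xs l))\<^sup>2)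
     + omega n L \<mu> (rho_w n W) (\<alpha> t) * Exp n m t (\<lambda>\<sigma>. cons_err n (drr_x n m W g \<alpha> x0 \<sigma> t l))"

definition drr_Htilde :: "nat \<Rightarrow> nat \<Rightarrow> (nat \<Rightarrow> nat \<Rightarrow> real) \<Rightarrow> (nat \<Rightarrow> nat \<Rightarrow> 'a::real_normed_vector \<Rightarrow> 'a)
    \<Rightarrow> (nat \<Rightarrow> real) \<Rightarrow> (nat \<Rightarrow> 'a) \<Rightarrow> 'a \<Rightarrow> real \<Rightarrow> real \<Rightarrow> nat \<Rightarrow> real" where
  "drr_Htilde n m W g \<alpha> x0 xs L \<mu> t =
     Exp n m t (\<lambda>\<sigma>. (norm (avg n (drr_iter n m W g \<alpha> x0 \<sigma> (Suc t)) - xs))\<^sup>2)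
     + omega n L \<mu> (rho_w n W) (\<alpha> t) * Exp n m t (\<lambda>\<sigma>. cons_err n (drr_iter n m W g \<alpha> x0 \<sigma> (Suc t)))"

text \<open>Stepsize condition (SC); the first bound is vacuous when rho_w = 0.\<close>
definition cond_SC :: "real \<Rightarrow> real \<Rightarrow> real \<Rightarrow> real \<Rightarrow> bool" where
  "cond_SC \<rho> \<mu> L a \<longleftrightarrow>
     (\<rho> \<noteq> 0 \<longrightarrow> a \<le> sqrt ((2 - \<rho>\<^sup>2) / (24 * \<rho>\<^sup>2 * (5 - \<rho>\<^sup>2))) * (1 - \<rho>\<^sup>2) / L)
     \<and> a \<le> (1 - \<rho>\<^sup>2) / (2 * \<mu>)
     \<and> a \<le> (1 - \<rho>\<^sup>2) * \<mu> / (8 * sqrt 30 * L\<^sup>2)"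

end

theory Submission
  imports Defs
begin

text \<open>Within epoch \<open>t\<close> the averaged iterate \<open>x\<^sub>t\<^sup>\<ell>\<close> is compared with the shuffled reference
  path \<open>x\<^sub>*\<^sup>\<ell>\<close>, which moves by the average gradient at \<open>x\<^sup>*\<close> of the components used in step \<open>\<ell>\<close> and is
  back at \<open>x\<^sup>*\<close> after a full epoch because the component gradients at the minimiser sum to zero.
  One step contracts the squared distance to the reference path by \<open>1 - \<alpha>\<mu>\<close>, up to the Bregman
  divergence of the step's average function between \<open>x\<^sub>*\<^sup>\<ell>\<close> and \<open>x\<^sup>*\<close> and a multiple of the consensus
  error; mixing with \<open>W\<close> contracts the consensus error by \<open>\<rho>\<^sub>w\<^sup>2\<close>, up to gradient terms that
  co-coercivity bounds by the same Bregman divergence and the gradients at \<open>x\<^sup>*\<close>.  With the weight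
  \<open>\<omega>\<^sub>t\<close>, (SC) makes the weighted sum contract by \<open>1 - \<alpha>\<mu>/4\<close> per step.  In expectation the Bregman
  term is at most \<open>\<sigma>\<^sub>s\<^sub>h\<^sub>u\<^sub>f\<^sub>f\<^sub>l\<^sub>e\<^sup>2\<close>, and the gradient term equals \<open>\<sigma>\<^sub>*\<^sup>2\<close> because each agent's
  \<open>\<ell>\<close>-th component is uniformly distributed; unrolling the recursion over \<open>\<ell>\<close> gives the bound.\<close>

section \<open>Averages and consensus error\<close>

lemma sum_eq_real_scaleR_avg:
  fixes w :: "nat \<Rightarrow> 'a::real_vector"
  assumes "n \<ge> 1"
  shows "(\<Sum>j<n. w j) = real n *\<^sub>R avg n w"
  using assms by (simp add: avg_def)

lemma sum_minus_avg_eq_0: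
  fixes w :: "nat \<Rightarrow> 'a::real_vector"
  assumes "n \<ge> 1"
  shows "(\<Sum>j<n. w j - avg n w) = 0"
  using sum_eq_real_scaleR_avg[OF assms, of w] by (simp add: sum_subtractf sum_constant_scaleR)

lemma power2_norm_add:
  fixes a b :: "'a::real_inner"
  shows "(norm (a + b))\<^sup>2 = (norm a)\<^sup>2 + 2 * inner a b + (norm b)\<^sup>2"
  by (simp add: power2_norm_eq_inner inner_add_left inner_add_right inner_commute)

lemma power2_norm_diff:
  fixes a b :: "'a::real_inner"
  shows "(norm (a - b))\<^sup>2 = (norm a)\<^sup>2 - 2 * inner a b + (norm b)\<^sup>2"
  by (simp add: power2_norm_eq_inner inner_diff_left inner_diff_right inner_commute)

lemma cons_err_nonneg: "0 \<le> cons_err n x"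
  unfolding cons_err_def by (simp add: sum_nonneg)

lemma sum_power2_norm_diff_eq:
  fixes w :: "nat \<Rightarrow> 'a::real_inner"
  assumes "n \<ge> 1"
  shows "(\<Sum>j<n. (norm (w j - c))\<^sup>2) = cons_err n w + real n * (norm (avg n w - c))\<^sup>2"
proof -
  let ?m = "avg n w"
  have "(norm (w j - c))\<^sup>2
      = (norm (w j - ?m))\<^sup>2 + 2 * inner (w j - ?m) (?m - c) + (norm (?m - c))\<^sup>2" for j
    using power2_norm_add[of "w j - ?m" "?m - c"] by simp
  moreover have "(\<Sum>j<n. inner (w j - ?m) (?m - c)) = 0"
    using sum_minus_avg_eq_0[OF assms, of w] by (simp add: inner_sum_left[symmetric])
  ultimately show ?thesis
    by (simp add: sum.distrib cons_err_def sum_distrib_left[symmetric])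
qed

lemma power2_norm_avg_le:
  fixes w :: "nat \<Rightarrow> 'a::real_inner"
  assumes "n \<ge> 1"
  shows "(norm (avg n w))\<^sup>2 \<le> (\<Sum>j<n. (norm (w j))\<^sup>2) / real n"
  using sum_power2_norm_diff_eq[OF assms, of w 0] cons_err_nonneg[of n w] assms
  by (simp add: field_simps)

lemma cons_err_le_sum_power2_norm:
  fixes w :: "nat \<Rightarrow> 'a::real_inner"
  assumes "n \<ge> 1"
  shows "cons_err n w \<le> (\<Sum>j<n. (norm (w j))\<^sup>2)"
  using sum_power2_norm_diff_eq[OF assms, of w 0] by simp

lemma avg_diff: "avg n (\<lambda>j. p j - q j) = avg n p - avg n (q :: nat \<Rightarrow> 'a::real_vector)"
  unfolding avg_def by (simp add: sum_subtractf scaleR_diff_right)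

lemma avg_scaleR: "avg n (\<lambda>j. c *\<^sub>R p j) = c *\<^sub>R avg n (p :: nat \<Rightarrow> 'a::real_vector)"
  unfolding avg_def by (simp add: scaleR_sum_right[symmetric])

lemma avg_mix:
  fixes z :: "nat \<Rightarrow> 'a::real_vector"
  assumes W_sym: "\<forall>i<n. \<forall>j<n. W i j = W j i"
    and W_stoch: "\<forall>i<n. (\<Sum>j<n. W i j) = 1"
  shows "avg n (\<lambda>i. \<Sum>j<n. W i j *\<^sub>R z j) = avg n z"
proof -
  have col: "(\<Sum>i<n. W i j) = 1" if "j < n" for j
    using W_stoch W_sym that by (metis (no_types, lifting) lessThan_iff sum.cong)
  have "(\<Sum>i<n. \<Sum>j<n. W i j *\<^sub>R z j) = (\<Sum>j<n. (\<Sum>i<n. W i j) *\<^sub>R z j)"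
    by (subst sum.swap) (simp add: scaleR_sum_left)
  also have "\<dots> = (\<Sum>j<n. z j)" by (intro sum.cong) (simp_all add: col)
  finally show ?thesis unfolding avg_def by simp
qed

section \<open>The mixing matrix\<close>

lemma bdd_above_rho_w_set:
  "bdd_above {sqrt (\<Sum>i<n. (\<Sum>j<n. (W i j - 1 / real n) * v j)\<^sup>2) | v. (\<Sum>j<n. (v j)\<^sup>2) \<le> 1}"
  unfolding bdd_above_def
proof (intro exI ballI)
  let ?B = "sqrt (\<Sum>i<n. (\<Sum>j<n. \<bar>W i j - 1 / real n\<bar>)\<^sup>2)"
  fix r assume "r \<in> {sqrt (\<Sum>i<n. (\<Sum>j<n. (W i j - 1 / real n) * v j)\<^sup>2) | v. (\<Sum>j<n. (v j)\<^sup>2) \<le> 1}"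
  then obtain v where r: "r = sqrt (\<Sum>i<n. (\<Sum>j<n. (W i j - 1 / real n) * v j)\<^sup>2)"
    and v: "(\<Sum>j<n. (v j)\<^sup>2) \<le> 1" by blast
  have "\<bar>v j\<bar> \<le> 1" if "j < n" for j
  proof -
    have "(v j)\<^sup>2 \<le> 1"
      using that v member_le_sum[of j "{..<n}" "\<lambda>j. (v j)\<^sup>2"] by simp
    then show ?thesis by (simp add: abs_square_le_1)
  qed
  then have "\<bar>\<Sum>j<n. (W i j - 1 / real n) * v j\<bar> \<le> (\<Sum>j<n. \<bar>W i j - 1 / real n\<bar>)" for i
    by (intro order_trans[OF sum_abs] sum_mono)
       (auto simp: abs_mult intro: mult_left_le[OF _ abs_ge_zero])
  then have "(\<Sum>j<n. (W i j - 1 / real n) * v j)\<^sup>2 \<le> (\<Sum>j<n. \<bar>W i j - 1 / real n\<bar>)\<^sup>2" for i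
    by (metis abs_ge_zero power2_abs power_mono)
  then show "r \<le> ?B" unfolding r by (intro real_sqrt_le_mono sum_mono) auto
qed

lemma centered_mix_le_rho_w_real:
  fixes v :: "nat \<Rightarrow> real"
  shows "(\<Sum>i<n. (\<Sum>j<n. (W i j - 1 / real n) * v j)\<^sup>2) \<le> (rho_w n W)\<^sup>2 * (\<Sum>j<n. (v j)\<^sup>2)"
proof (cases "(\<Sum>j<n. (v j)\<^sup>2) = 0")
  case True
  then have "\<forall>j<n. v j = 0" by (simp add: sum_nonneg_eq_0_iff)
  then show ?thesis by simp
next
  case False
  define S where "S = (\<Sum>j<n. (v j)\<^sup>2)"
  have S: "S > 0" using False sum_nonneg[of "{..<n}" "\<lambda>j. (v j)\<^sup>2"] unfolding S_def by simp
  define u where "u j = v j / sqrt S" for j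
  have Mu: "(\<Sum>i<n. (\<Sum>j<n. (W i j - 1 / real n) * u j)\<^sup>2)
      = (\<Sum>i<n. (\<Sum>j<n. (W i j - 1 / real n) * v j)\<^sup>2) / S"
    using S by (simp add: u_def sum_divide_distrib[symmetric] power_divide)
  have "(\<Sum>j<n. (u j)\<^sup>2) = 1"
    using S unfolding u_def by (simp add: power_divide sum_divide_distrib[symmetric] S_def)
  then have "sqrt (\<Sum>i<n. (\<Sum>j<n. (W i j - 1 / real n) * u j)\<^sup>2) \<in>
        {sqrt (\<Sum>i<n. (\<Sum>j<n. (W i j - 1 / real n) * v j)\<^sup>2) | v. (\<Sum>j<n. (v j)\<^sup>2) \<le> 1}"
    by (intro CollectI exI[of _ u]) simp
  from cSup_upper[OF this bdd_above_rho_w_set]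
  have "sqrt (\<Sum>i<n. (\<Sum>j<n. (W i j - 1 / real n) * u j)\<^sup>2) \<le> rho_w n W"
    unfolding rho_w_def by simp
  then have "(sqrt (\<Sum>i<n. (\<Sum>j<n. (W i j - 1 / real n) * u j)\<^sup>2))\<^sup>2 \<le> (rho_w n W)\<^sup>2"
    by (rule power_mono) (simp_all add: sum_nonneg)
  then have "(\<Sum>i<n. (\<Sum>j<n. (W i j - 1 / real n) * u j)\<^sup>2) \<le> (rho_w n W)\<^sup>2"
    by (simp add: sum_nonneg)
  then show ?thesis using S unfolding Mu S_def by (simp add: divide_le_eq mult.commute)
qed

lemma centered_mix_le_rho_w:
  fixes w :: "nat \<Rightarrow> 'a::euclidean_space"
  shows "(\<Sum>i<n. (norm (\<Sum>j<n. (W i j - 1 / real n) *\<^sub>R w j))\<^sup>2)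
    \<le> (rho_w n W)\<^sup>2 * (\<Sum>j<n. (norm (w j))\<^sup>2)"
proof -
  have norm_sq: "(norm (z::'a))\<^sup>2 = (\<Sum>b\<in>Basis. (inner z b)\<^sup>2)" for z
    unfolding power2_norm_eq_inner euclidean_inner[of z z] by (simp add: power2_eq_square)
  have inner_mix: "inner (\<Sum>j<n. (W i j - 1 / real n) *\<^sub>R w j) b
      = (\<Sum>j<n. (W i j - 1 / real n) * inner (w j) b)" for i b
    by (simp add: inner_sum_left)
  have "(\<Sum>i<n. (norm (\<Sum>j<n. (W i j - 1 / real n) *\<^sub>R w j))\<^sup>2)
      = (\<Sum>i<n. \<Sum>b\<in>Basis. (\<Sum>j<n. (W i j - 1 / real n) * inner (w j) b)\<^sup>2)"
    by (simp only: norm_sq inner_mix)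
  also have "\<dots> = (\<Sum>b\<in>Basis. \<Sum>i<n. (\<Sum>j<n. (W i j - 1 / real n) * inner (w j) b)\<^sup>2)"
    by (rule sum.swap)
  also have "\<dots> \<le> (\<Sum>b\<in>Basis. (rho_w n W)\<^sup>2 * (\<Sum>j<n. (inner (w j) b)\<^sup>2))"
    by (intro sum_mono centered_mix_le_rho_w_real)
  also have "\<dots> = (rho_w n W)\<^sup>2 * (\<Sum>j<n. \<Sum>b\<in>Basis. (inner (w j) b)\<^sup>2)"
    by (simp only: sum_distrib_left[symmetric] sum.swap[of _ Basis])
  also have "\<dots> = (rho_w n W)\<^sup>2 * (\<Sum>j<n. (norm (w j))\<^sup>2)"
    by (simp only: norm_sq)
  finally show ?thesis .
qed

lemma cons_err_mix_le:
  fixes z :: "nat \<Rightarrow> 'a::euclidean_space"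
  assumes n: "n \<ge> 1"
    and W_sym: "\<forall>i<n. \<forall>j<n. W i j = W j i"
    and W_stoch: "\<forall>i<n. (\<Sum>j<n. W i j) = 1"
  shows "cons_err n (\<lambda>i. \<Sum>j<n. W i j *\<^sub>R z j) \<le> (rho_w n W)\<^sup>2 * cons_err n z"
proof -
  let ?m = "avg n z"
  have dev: "(\<Sum>j<n. W i j *\<^sub>R z j) - ?m = (\<Sum>j<n. (W i j - 1 / real n) *\<^sub>R (z j - ?m))"
    if "i < n" for i
  proof -
    have "(\<Sum>j<n. (W i j - 1 / real n) *\<^sub>R (z j - ?m))
        = (\<Sum>j<n. W i j *\<^sub>R (z j - ?m)) - (1 / real n) *\<^sub>R (\<Sum>j<n. z j - ?m)"
      by (simp add: scaleR_diff_left scaleR_diff_right sum_subtractf scaleR_sum_right)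
    also have "(\<Sum>j<n. W i j *\<^sub>R (z j - ?m)) = (\<Sum>j<n. W i j *\<^sub>R z j) - (\<Sum>j<n. W i j) *\<^sub>R ?m"
      by (simp add: scaleR_diff_right sum_subtractf scaleR_sum_left)
    finally show ?thesis using W_stoch that by (simp add: sum_minus_avg_eq_0[OF n])
  qed
  have "cons_err n (\<lambda>i. \<Sum>j<n. W i j *\<^sub>R z j)
      = (\<Sum>i<n. (norm (\<Sum>j<n. (W i j - 1 / real n) *\<^sub>R (z j - ?m)))\<^sup>2)"
    unfolding cons_err_def avg_mix[OF W_sym W_stoch] by (intro sum.cong) (simp_all add: dev)
  also have "\<dots> \<le> (rho_w n W)\<^sup>2 * cons_err n z"
    unfolding cons_err_def by (rule centered_mix_le_rho_w)
  finally show ?thesis .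
qed

section \<open>Inequalities for convex functions\<close>

lemma abs_inner_diff_le_lipschitz:
  fixes G :: "'a::real_inner \<Rightarrow> 'a"
  assumes "norm (G x - G y) \<le> L * norm (x - y)"
  shows "\<bar>inner (G x - G y) (x - y)\<bar> \<le> L * (norm (x - y))\<^sup>2"
proof -
  have "\<bar>inner (G x - G y) (x - y)\<bar> \<le> norm (G x - G y) * norm (x - y)"
    by (rule Cauchy_Schwarz_ineq2)
  also have "\<dots> \<le> L * norm (x - y) * norm (x - y)"
    using assms by (simp add: mult_right_mono)
  finally show ?thesis by (simp add: power2_eq_square)
qed

text \<open>Co-coercivity with the constant \<open>4 L\<close>: compare \<open>F\<close> at \<open>y\<close> and at the gradient step
  \<open>y - (G y - G x) / (2 L)\<close>.\<close>
lemma norm_grad_diff_sq_le_bregman: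
  fixes F :: "'a::real_inner \<Rightarrow> real"
  assumes convex: "\<And>x y. F y \<ge> F x + inner (G x) (y - x)"
    and lip: "\<And>x y. norm (G x - G y) \<le> L * norm (x - y)"
    and L: "L > 0"
  shows "(norm (G y - G x))\<^sup>2 \<le> 4 * L * (F y - F x - inner (G x) (y - x))"
proof -
  define d where "d = G y - G x"
  define z where "z = y - (1 / (2 * L)) *\<^sub>R d"
  have zy: "z - y = - ((1 / (2 * L)) *\<^sub>R d)" unfolding z_def by simp
  have "F x + inner (G x) (z - x) \<le> F z" and "F z \<le> F y - inner (G z) (y - z)"
    using convex[of x z] convex[of z y] by simp_all
  moreover have "inner (G z - G y) (z - y) \<le> L * (norm (z - y))\<^sup>2"
    using abs_inner_diff_le_lipschitz[OF lip[of z y]] by (meson abs_le_D1)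
  ultimately have "F x + inner (G x) (y - x) \<le> F y + inner (G y - G x) (z - y) + L * (norm (z - y))\<^sup>2"
    by (simp add: inner_diff_left inner_diff_right)
  also have "inner (G y - G x) (z - y) = - (1 / (2 * L)) * (norm d)\<^sup>2"
    unfolding zy d_def by (simp add: power2_norm_eq_inner)
  also have "L * (norm (z - y))\<^sup>2 = (1 / (4 * L)) * (norm d)\<^sup>2"
    unfolding zy using L by (simp add: power2_eq_square field_simps)
  finally show ?thesis unfolding d_def using L by (simp add: field_simps)
qed

lemma rho_sq_norm_diff_sq_le:
  fixes A B :: "'a::real_normed_vector"
  assumes "\<rho>\<^sup>2 < 1"
  shows "\<rho>\<^sup>2 * (norm (A - B))\<^sup>2 \<le> (1 + \<rho>\<^sup>2) / 2 * (norm A)\<^sup>2 + 2 * \<rho>\<^sup>2 / (1 - \<rho>\<^sup>2) * (norm B)\<^sup>2"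
proof -
  define s where "s = 1 - \<rho>\<^sup>2"
  have s: "s > 0" using assms unfolding s_def by simp
  have "\<rho>\<^sup>2 * (norm (A - B))\<^sup>2 \<le> \<rho>\<^sup>2 * (norm A + norm B)\<^sup>2"
    by (intro mult_left_mono power_mono norm_triangle_ineq4) simp_all
  moreover have "s * ((1 + \<rho>\<^sup>2) / 2 * (norm A)\<^sup>2 + 2 * \<rho>\<^sup>2 / s * (norm B)\<^sup>2 - \<rho>\<^sup>2 * (norm A + norm B)\<^sup>2)
      = (1/2) * (s * norm A - 2 * \<rho>\<^sup>2 * norm B)\<^sup>2 + \<rho>\<^sup>2 * s * (norm B)\<^sup>2"
    using s unfolding s_def by (simp add: field_simps power2_eq_square)
  then have "0 \<le> s * ((1 + \<rho>\<^sup>2) / 2 * (norm A)\<^sup>2 + 2 * \<rho>\<^sup>2 / s * (norm B)\<^sup>2 - \<rho>\<^sup>2 * (norm A + norm B)\<^sup>2)"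
    using s by simp
  ultimately show ?thesis using s unfolding s_def by (simp add: zero_le_mult_iff)
qed

lemma power2_norm_add3_le:
  fixes p q r :: "'a::real_normed_vector"
  shows "(norm (p + q + r))\<^sup>2 \<le> 3 * (norm p)\<^sup>2 + 3 * (norm q)\<^sup>2 + 3 * (norm r)\<^sup>2"
proof -
  have "(norm (p + q + r))\<^sup>2 \<le> (norm p + norm q + norm r)\<^sup>2"
    by (intro power_mono) (auto intro: order_trans[OF norm_triangle_ineq] add_right_mono)
  also have "\<dots> \<le> 3 * (norm p)\<^sup>2 + 3 * (norm q)\<^sup>2 + 3 * (norm r)\<^sup>2"
    using sum_squares_ge_zero[of "norm p - norm q" "norm q - norm r"]
      zero_le_power2[of "norm p - norm r"] by (simp add: power2_eq_square algebra_simps)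
  finally show ?thesis .
qed

section \<open>Consequences of the step-size condition\<close>

lemma cond_SC_rho_bound:
  fixes a \<mu> L \<rho> :: real
  assumes a: "0 < a" and L: "0 < L" and rho: "\<rho>\<^sup>2 < 1" and SC: "cond_SC \<rho> \<mu> L a"
  shows "48 * a\<^sup>2 * L\<^sup>2 * \<rho>\<^sup>2 \<le> (1 - \<rho>\<^sup>2)\<^sup>2"
proof (cases "\<rho> = 0")
  case False
  define Q where "Q = (2 - \<rho>\<^sup>2) / (24 * \<rho>\<^sup>2 * (5 - \<rho>\<^sup>2))"
  have r2: "\<rho>\<^sup>2 > 0" and r5: "5 - \<rho>\<^sup>2 > 0" using False rho by simp_all
  have "a * L / (1 - \<rho>\<^sup>2) \<le> sqrt Q"
    using SC False L rho unfolding cond_SC_def Q_def by (simp add: field_simps)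
  moreover have "0 \<le> Q" using r2 r5 rho unfolding Q_def by simp
  ultimately have "(a * L / (1 - \<rho>\<^sup>2))\<^sup>2 \<le> Q"
    using a L rho by (metis less_imp_le power_mono real_sqrt_pow2 zero_le_divide_iff zero_le_mult_iff diff_ge_0_iff_ge)
  then have "(a * L)\<^sup>2 \<le> ((2 - \<rho>\<^sup>2) * (1 - \<rho>\<^sup>2)\<^sup>2) / (24 * \<rho>\<^sup>2 * (5 - \<rho>\<^sup>2))"
    using rho unfolding Q_def by (simp add: power_divide field_simps)
  then have "(a * L)\<^sup>2 * (24 * \<rho>\<^sup>2 * (5 - \<rho>\<^sup>2)) \<le> (2 - \<rho>\<^sup>2) * (1 - \<rho>\<^sup>2)\<^sup>2"
    using r2 r5 by (simp add: pos_le_divide_eq)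
  moreover have "96 * ((a * L)\<^sup>2 * \<rho>\<^sup>2) \<le> (a * L)\<^sup>2 * (24 * \<rho>\<^sup>2 * (5 - \<rho>\<^sup>2))"
    using mult_left_mono[of 96 "24 * (5 - \<rho>\<^sup>2)" "(a * L)\<^sup>2 * \<rho>\<^sup>2"] rho by (simp add: mult_ac)
  moreover have "(2 - \<rho>\<^sup>2) * (1 - \<rho>\<^sup>2)\<^sup>2 \<le> 2 * (1 - \<rho>\<^sup>2)\<^sup>2"
    using r2 by (intro mult_right_mono) auto
  ultimately show ?thesis by (simp add: power_mult_distrib mult_ac)
qed simp

lemma cond_SC_consequences:
  fixes a \<mu> L \<rho> :: real
  assumes a: "0 < a" and mu: "0 < \<mu>" and muL: "\<mu> \<le> L" and SC: "cond_SC \<rho> \<mu> L a"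
  shows "\<rho>\<^sup>2 < 1" and "a * \<mu> \<le> (1 - \<rho>\<^sup>2) / 2" and "1920 * a\<^sup>2 * L ^ 4 \<le> (1 - \<rho>\<^sup>2)\<^sup>2 * \<mu>\<^sup>2"
    and "48 * a\<^sup>2 * L\<^sup>2 * \<rho>\<^sup>2 \<le> (1 - \<rho>\<^sup>2)\<^sup>2" and "a * L\<^sup>2 \<le> \<mu>"
proof -
  have L: "0 < L" using mu muL by simp
  show SC_mu: "a * \<mu> \<le> (1 - \<rho>\<^sup>2) / 2" using SC mu unfolding cond_SC_def by (simp add: field_simps)
  show rho: "\<rho>\<^sup>2 < 1" using SC_mu mult_pos_pos[OF a mu] by (simp add: field_simps)
  have "a * (8 * sqrt 30 * L\<^sup>2) \<le> (1 - \<rho>\<^sup>2) * \<mu>" using SC L unfolding cond_SC_def by (simp add: field_simps)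
  then have "(a * (8 * sqrt 30 * L\<^sup>2))\<^sup>2 \<le> ((1 - \<rho>\<^sup>2) * \<mu>)\<^sup>2"
    using a L by (intro power_mono) auto
  then show SC_L: "1920 * a\<^sup>2 * L ^ 4 \<le> (1 - \<rho>\<^sup>2)\<^sup>2 * \<mu>\<^sup>2"
    by (simp add: power_mult_distrib power4_eq_xxxx power2_eq_square mult_ac)
  show "48 * a\<^sup>2 * L\<^sup>2 * \<rho>\<^sup>2 \<le> (1 - \<rho>\<^sup>2)\<^sup>2" by (rule cond_SC_rho_bound[OF a L rho SC])
  have "(a * L\<^sup>2)\<^sup>2 \<le> 1920 * (a * L\<^sup>2)\<^sup>2" by simp
  also have "\<dots> = 1920 * a\<^sup>2 * L ^ 4" by (simp add: power_mult_distrib power4_eq_xxxx power2_eq_square)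
  also have "\<dots> \<le> (1 - \<rho>\<^sup>2)\<^sup>2 * \<mu>\<^sup>2" by (rule SC_L)
  also have "\<dots> \<le> 1 * \<mu>\<^sup>2" using rho by (intro mult_right_mono power_le_one) auto
  finally have "(a * L\<^sup>2)\<^sup>2 \<le> \<mu>\<^sup>2" by simp
  then show "a * L\<^sup>2 \<le> \<mu>" by (rule power2_le_imp_le[OF _ less_imp_le[OF mu]])
qed

lemma omega_nonneg: "0 < a \<Longrightarrow> 0 < \<mu> \<Longrightarrow> \<rho>\<^sup>2 < 1 \<Longrightarrow> 0 \<le> omega n L \<mu> \<rho> a"
  unfolding omega_def by simp

lemma omega_times_beta:
  assumes "n \<ge> 1" and "0 < \<mu>" and "\<rho>\<^sup>2 < 1"
  shows "omega n L \<mu> \<rho> a * (2 * \<rho>\<^sup>2 / (1 - \<rho>\<^sup>2)) = 32 * a * L\<^sup>2 * \<rho>\<^sup>2 / (real n * \<mu> * (1 - \<rho>\<^sup>2)\<^sup>2)"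
  using assms unfolding omega_def by (simp add: field_simps power2_eq_square)

lemma lyapunov_coeff_dist_le:
  fixes a \<mu> L \<rho> :: real
  assumes n: "n \<ge> 1" and a: "0 < a" and mu: "0 < \<mu>" and L: "0 < L" and rho: "\<rho>\<^sup>2 < 1"
    and SC_L: "1920 * a\<^sup>2 * L ^ 4 \<le> (1 - \<rho>\<^sup>2)\<^sup>2 * \<mu>\<^sup>2"
  shows "(1 - a * \<mu>) + omega n L \<mu> \<rho> a * (2 * \<rho>\<^sup>2 / (1 - \<rho>\<^sup>2)) * (3 * a\<^sup>2 * L\<^sup>2 * real n)
    \<le> 1 - a * \<mu> / 4"
proof -
  define s where "s = 1 - \<rho>\<^sup>2"
  have s: "0 < s" using rho unfolding s_def by simp
  have "128 * a\<^sup>2 * L ^ 4 * \<rho>\<^sup>2 \<le> 1920 * a\<^sup>2 * L ^ 4 * 1"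
    using rho a L by (intro mult_mono) auto
  also have "\<dots> \<le> s\<^sup>2 * \<mu>\<^sup>2" using SC_L unfolding s_def by simp
  finally have "a * (128 * a\<^sup>2 * L ^ 4 * \<rho>\<^sup>2) \<le> a * (s\<^sup>2 * \<mu>\<^sup>2)" using a by simp
  then have "96 * a ^ 3 * L ^ 4 * \<rho>\<^sup>2 / (\<mu> * s\<^sup>2) \<le> 3 * a * \<mu> / 4"
    using s mu by (simp add: field_simps power2_eq_square power3_eq_cube power4_eq_xxxx)
  moreover have "omega n L \<mu> \<rho> a * (2 * \<rho>\<^sup>2 / (1 - \<rho>\<^sup>2)) * (3 * a\<^sup>2 * L\<^sup>2 * real n)
      = 32 * a * L\<^sup>2 * \<rho>\<^sup>2 / (real n * \<mu> * s\<^sup>2) * (3 * a\<^sup>2 * L\<^sup>2 * real n)"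
    unfolding omega_times_beta[OF n mu rho] s_def ..
  moreover have "\<dots> = 96 * a ^ 3 * L ^ 4 * \<rho>\<^sup>2 / (\<mu> * s\<^sup>2)"
    using n s mu by (simp add: field_simps power2_eq_square power3_eq_cube power4_eq_xxxx)
  ultimately show ?thesis by linarith
qed

lemma consensus_coeff_le_omega:
  fixes a \<mu> L \<rho> :: real
  assumes n: "n \<ge> 1" and a: "0 < a" and mu: "0 < \<mu>" and muL: "\<mu> \<le> L" and rho: "\<rho>\<^sup>2 < 1"
    and aL2: "a * L\<^sup>2 \<le> \<mu>"
  shows "(2 * a * L + a\<^sup>2 * L\<^sup>2) / real n \<le> 3 * (1 - \<rho>\<^sup>2) / 16 * omega n L \<mu> \<rho> a"
proof -
  define s where "s = 1 - \<rho>\<^sup>2"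
  have s: "0 < s" using rho unfolding s_def by simp
  have L: "0 < L" using mu muL by simp
  have aL: "a * L \<le> 1"
  proof -
    have "a * L = a * L\<^sup>2 / L" using L by (simp add: power2_eq_square)
    also have "\<dots> \<le> \<mu> / L" using aL2 L by (simp add: divide_right_mono)
    also have "\<dots> \<le> 1" using mu muL by simp
    finally show ?thesis .
  qed
  have "2 * a * L + a\<^sup>2 * L\<^sup>2 = a * L * (2 + a * L)" by (simp add: power2_eq_square algebra_simps)
  also have "\<dots> \<le> a * L * 3" using aL a L by (intro mult_left_mono) auto
  also have "\<dots> \<le> 3 * a * L\<^sup>2 / \<mu>" using a L mu muL by (simp add: field_simps power2_eq_square)
  finally have "(2 * a * L + a\<^sup>2 * L\<^sup>2) / real n \<le> (3 * a * L\<^sup>2 / \<mu>) / real n"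
    by (rule divide_right_mono) simp
  also have "\<dots> = 3 * s / 16 * omega n L \<mu> \<rho> a"
    unfolding omega_def s_def[symmetric] using s mu n by (simp add: field_simps)
  finally show ?thesis unfolding s_def .
qed

lemma lyapunov_coeff_cons_le:
  fixes a \<mu> L \<rho> :: real
  assumes n: "n \<ge> 1" and a: "0 < a" and mu: "0 < \<mu>" and muL: "\<mu> \<le> L" and rho: "\<rho>\<^sup>2 < 1"
    and SC_mu: "a * \<mu> \<le> (1 - \<rho>\<^sup>2) / 2"
    and SC_rho: "48 * a\<^sup>2 * L\<^sup>2 * \<rho>\<^sup>2 \<le> (1 - \<rho>\<^sup>2)\<^sup>2" and aL2: "a * L\<^sup>2 \<le> \<mu>"
  shows "(2 * a * L + a\<^sup>2 * L\<^sup>2) / real n + omega n L \<mu> \<rho> a * ((1 + \<rho>\<^sup>2) / 2)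
      + omega n L \<mu> \<rho> a * (2 * \<rho>\<^sup>2 / (1 - \<rho>\<^sup>2)) * (3 * a\<^sup>2 * L\<^sup>2)
    \<le> (1 - a * \<mu> / 4) * omega n L \<mu> \<rho> a"
proof -
  define s where "s = 1 - \<rho>\<^sup>2"
  define \<omega> where "\<omega> = omega n L \<mu> \<rho> a"
  have s: "0 < s" "s \<le> 1" using rho unfolding s_def by simp_all
  have w0: "0 \<le> \<omega>" unfolding \<omega>_def using omega_nonneg[OF a mu rho] .
  have cons_coeff: "(2 * a * L + a\<^sup>2 * L\<^sup>2) / real n \<le> 3 * s / 16 * \<omega>"
    unfolding s_def \<omega>_def by (rule consensus_coeff_le_omega[OF n a mu muL rho aL2])
  have "2 * \<rho>\<^sup>2 / (1 - \<rho>\<^sup>2) * (3 * a\<^sup>2 * L\<^sup>2) = 6 * (a\<^sup>2 * L\<^sup>2 * \<rho>\<^sup>2) / s"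
    unfolding s_def using s by (simp add: field_simps)
  also have "\<dots> \<le> 6 * (s\<^sup>2 / 48) / s" using SC_rho s unfolding s_def by (intro divide_right_mono) auto
  also have "\<dots> = s / 8" using s by (simp add: power2_eq_square)
  finally have "\<omega> * (2 * \<rho>\<^sup>2 / (1 - \<rho>\<^sup>2) * (3 * a\<^sup>2 * L\<^sup>2)) \<le> \<omega> * (s / 8)"
    using w0 by (rule mult_left_mono)
  then have grad_coeff: "\<omega> * (2 * \<rho>\<^sup>2 / (1 - \<rho>\<^sup>2)) * (3 * a\<^sup>2 * L\<^sup>2) \<le> s / 8 * \<omega>"
    by (simp add: mult_ac)
  have contraction: "(1 - s / 8) * \<omega> \<le> (1 - a * \<mu> / 4) * \<omega>"
    using SC_mu w0 unfolding s_def by (intro mult_right_mono) (auto simp: mult_ac)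
  have "\<omega> * ((1 + \<rho>\<^sup>2) / 2) = (1 - s / 2) * \<omega>" unfolding s_def by (simp add: field_simps)
  moreover have "(1 - s / 2) * \<omega> + 3 * s / 16 * \<omega> + s / 8 * \<omega> \<le> (1 - s / 8) * \<omega>"
    using w0 s by (simp add: algebra_simps)
  ultimately show ?thesis using cons_coeff grad_coeff contraction unfolding \<omega>_def by linarith
qed

lemma lyapunov_coeff_bregman_le:
  fixes a \<mu> L \<rho> :: real
  assumes n: "n \<ge> 1" and a: "0 < a" and mu: "0 < \<mu>" and L: "0 < L" and rho: "\<rho>\<^sup>2 < 1"
  shows "2 * a + omega n L \<mu> \<rho> a * (2 * \<rho>\<^sup>2 / (1 - \<rho>\<^sup>2)) * (12 * a\<^sup>2 * L * real n)
    \<le> 2 * (a * (1 + 240 * a\<^sup>2 * \<rho>\<^sup>2 * L ^ 3 / (\<mu> * (1 - \<rho>\<^sup>2)\<^sup>2)))"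
proof -
  define s where "s = 1 - \<rho>\<^sup>2"
  have s: "0 < s" using rho unfolding s_def by simp
  have "omega n L \<mu> \<rho> a * (2 * \<rho>\<^sup>2 / (1 - \<rho>\<^sup>2)) * (12 * a\<^sup>2 * L * real n)
      = 32 * a * L\<^sup>2 * \<rho>\<^sup>2 / (real n * \<mu> * s\<^sup>2) * (12 * a\<^sup>2 * L * real n)"
    unfolding omega_times_beta[OF n mu rho] s_def ..
  also have "\<dots> = 384 * a ^ 3 * L ^ 3 * \<rho>\<^sup>2 / (\<mu> * (1 - \<rho>\<^sup>2)\<^sup>2)"
    unfolding s_def[symmetric] using n s mu by (simp add: field_simps power2_eq_square power3_eq_cube)
  also have "\<dots> \<le> 480 * a ^ 3 * L ^ 3 * \<rho>\<^sup>2 / (\<mu> * (1 - \<rho>\<^sup>2)\<^sup>2)"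
    using a L mu by (intro divide_right_mono mult_right_mono) auto
  finally show ?thesis by (simp add: field_simps power2_eq_square power3_eq_cube)
qed

lemma lyapunov_coeff_grad_sq_le:
  fixes a \<mu> L \<rho> :: real
  assumes n: "n \<ge> 1" and a: "0 < a" and mu: "0 < \<mu>" and rho: "\<rho>\<^sup>2 < 1" and V: "0 \<le> V"
  shows "omega n L \<mu> \<rho> a * (2 * \<rho>\<^sup>2 / (1 - \<rho>\<^sup>2)) * (3 * a\<^sup>2) * V
    \<le> 2 * (120 * a ^ 3 * \<rho>\<^sup>2 * L\<^sup>2 / (\<mu> * (1 - \<rho>\<^sup>2)\<^sup>2) * (V / real n))"
proof -
  define s where "s = 1 - \<rho>\<^sup>2"
  have s: "0 < s" using rho unfolding s_def by simp
  have "omega n L \<mu> \<rho> a * (2 * \<rho>\<^sup>2 / (1 - \<rho>\<^sup>2)) * (3 * a\<^sup>2) * V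
      = 32 * a * L\<^sup>2 * \<rho>\<^sup>2 / (real n * \<mu> * s\<^sup>2) * (3 * a\<^sup>2) * V"
    unfolding omega_times_beta[OF n mu rho] s_def ..
  also have "\<dots> = 96 * (a ^ 3 * \<rho>\<^sup>2 * L\<^sup>2 / (\<mu> * (1 - \<rho>\<^sup>2)\<^sup>2) * (V / real n))"
    unfolding s_def[symmetric] using n s mu by (simp add: field_simps power2_eq_square power3_eq_cube)
  also have "\<dots> \<le> 240 * (a ^ 3 * \<rho>\<^sup>2 * L\<^sup>2 / (\<mu> * (1 - \<rho>\<^sup>2)\<^sup>2) * (V / real n))"
    using a mu V by (intro mult_right_mono) auto
  finally show ?thesis by simp
qed

text \<open>The weight \<open>\<omega> = 16 a L\<^sup>2 / (n \<mu> (1 - \<rho>\<^sup>2))\<close> is large enough for the consensus term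
  of \<open>dist\<close> to be absorbed by the contraction \<open>(1 + \<rho>\<^sup>2)/2\<close> in \<open>cons\<close>, and small enough for the
  \<open>d\<close>-term of \<open>\<omega> * cons\<close> to be absorbed by the slack \<open>3 a \<mu> / 4\<close> in \<open>dist\<close>.\<close>
lemma lyapunov_combination:
  fixes a \<mu> L \<rho> :: real
  assumes n: "n \<ge> 1" and a: "0 < a" and mu: "0 < \<mu>" and muL: "\<mu> \<le> L" and SC: "cond_SC \<rho> \<mu> L a"
    and nonneg: "0 \<le> d" "0 \<le> E" "0 \<le> D" "0 \<le> V"
    and dist: "d' \<le> (1 - a * \<mu>) * d + 2 * a * D + (2 * a * L + a\<^sup>2 * L\<^sup>2) / real n * E"
    and cons: "E' \<le> (1 + \<rho>\<^sup>2) / 2 * E + 2 * \<rho>\<^sup>2 / (1 - \<rho>\<^sup>2) * a\<^sup>2 *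
              (3 * L\<^sup>2 * (E + real n * d) + 12 * L * real n * D + 3 * V)"
  shows "d' + omega n L \<mu> \<rho> a * E'
     \<le> (1 - a * \<mu> / 4) * (d + omega n L \<mu> \<rho> a * E)
        + 2 * (a * (1 + 240 * a\<^sup>2 * \<rho>\<^sup>2 * L ^ 3 / (\<mu> * (1 - \<rho>\<^sup>2)\<^sup>2)) * D
               + 120 * a ^ 3 * \<rho>\<^sup>2 * L\<^sup>2 / (\<mu> * (1 - \<rho>\<^sup>2)\<^sup>2) * (V / real n))"
proof -
  note SC' = cond_SC_consequences[OF a mu muL SC]
  have L: "0 < L" using mu muL by simp
  note coeffs = lyapunov_coeff_dist_le[OF n a mu L SC'(1,3)] lyapunov_coeff_cons_le[OF n a mu muL SC'(1,2,4,5)]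
    lyapunov_coeff_bregman_le[OF n a mu L SC'(1)] lyapunov_coeff_grad_sq_le[OF n a mu SC'(1) nonneg(4)]
  define \<omega> where "\<omega> = omega n L \<mu> \<rho> a"
  define \<beta> where "\<beta> = 2 * \<rho>\<^sup>2 / (1 - \<rho>\<^sup>2)"
  have "\<omega> * E' \<le> \<omega> * ((1 + \<rho>\<^sup>2) / 2 * E + \<beta> * a\<^sup>2 * (3 * L\<^sup>2 * (E + real n * d) + 12 * L * real n * D + 3 * V))"
    using cons omega_nonneg[OF a mu SC'(1)] unfolding \<omega>_def \<beta>_def by (rule mult_left_mono)
  then have "d' + \<omega> * E' \<le> ((1 - a * \<mu>) + \<omega> * \<beta> * (3 * a\<^sup>2 * L\<^sup>2 * real n)) * d
       + ((2 * a * L + a\<^sup>2 * L\<^sup>2) / real n + \<omega> * ((1 + \<rho>\<^sup>2) / 2) + \<omega> * \<beta> * (3 * a\<^sup>2 * L\<^sup>2)) * E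
       + (2 * a + \<omega> * \<beta> * (12 * a\<^sup>2 * L * real n)) * D + \<omega> * \<beta> * (3 * a\<^sup>2) * V"
    using dist by (simp add: algebra_simps)
  also have "\<dots> \<le> (1 - a * \<mu> / 4) * d + ((1 - a * \<mu> / 4) * \<omega>) * E
      + 2 * (a * (1 + 240 * a\<^sup>2 * \<rho>\<^sup>2 * L ^ 3 / (\<mu> * (1 - \<rho>\<^sup>2)\<^sup>2))) * D
      + 2 * (120 * a ^ 3 * \<rho>\<^sup>2 * L\<^sup>2 / (\<mu> * (1 - \<rho>\<^sup>2)\<^sup>2) * (V / real n))"
    unfolding \<omega>_def \<beta>_def by (intro add_mono mult_right_mono) (fact coeffs nonneg)+
  also have "\<dots> = (1 - a * \<mu> / 4) * (d + \<omega> * E)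
        + 2 * (a * (1 + 240 * a\<^sup>2 * \<rho>\<^sup>2 * L ^ 3 / (\<mu> * (1 - \<rho>\<^sup>2)\<^sup>2)) * D
               + 120 * a ^ 3 * \<rho>\<^sup>2 * L\<^sup>2 / (\<mu> * (1 - \<rho>\<^sup>2)\<^sup>2) * (V / real n))"
    by (simp only: distrib_left distrib_right mult.assoc add.assoc)
  finally show ?thesis unfolding \<omega>_def .
qed

section \<open>One step for a family of strongly convex functions\<close>

text \<open>\<open>bregman_avg n F G x y\<close> is the Bregman divergence \<open>D\<^sub>s(y, x)\<close> of the average
  \<open>s = (1/n) \<Sum>\<^sub>i F\<^sub>i\<close>, with \<open>G\<^sub>i\<close> playing the role of \<open>\<nabla>F\<^sub>i\<close>.\<close>
definition bregman_avg :: "nat \<Rightarrow> (nat \<Rightarrow> 'a::real_inner \<Rightarrow> real) \<Rightarrow> (nat \<Rightarrow> 'a \<Rightarrow> 'a) \<Rightarrow> 'a \<Rightarrow> 'a \<Rightarrow> real"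
  where "bregman_avg n F G x y =
    (1 / real n) * (\<Sum>i<n. F i y) - (1 / real n) * (\<Sum>i<n. F i x) - inner (avg n (\<lambda>i. G i x)) (y - x)"

lemma bregman_avg_eq_sum:
  "bregman_avg n F G x y = (\<Sum>i<n. F i y - F i x - inner (G i x) (y - x)) / real n"
  unfolding bregman_avg_def avg_def
  by (simp add: sum_subtractf inner_sum_left diff_divide_distrib)

lemma bregman_avg_diff:
  "bregman_avg n F G x y - bregman_avg n F G x z = (\<Sum>i<n. F i y - F i z - inner (G i x) (y - z)) / real n"
  unfolding bregman_avg_eq_sum
  by (simp add: diff_divide_distrib[symmetric] sum_subtractf[symmetric] inner_diff_right algebra_simps)

locale strongly_convex_family =
  fixes n :: nat and F :: "nat \<Rightarrow> 'a::euclidean_space \<Rightarrow> real" and G :: "nat \<Rightarrow> 'a \<Rightarrow> 'a"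
    and \<mu> L :: real
  assumes n_pos: "n \<ge> 1"
    and strongly_convex: "\<And>i x y. i < n \<Longrightarrow> F i x + inner (G i x) (y - x) + \<mu> / 2 * (norm (y - x))\<^sup>2 \<le> F i y"
    and lipschitz: "\<And>i x y. i < n \<Longrightarrow> norm (G i x - G i y) \<le> L * norm (x - y)"
    and mu_pos: "0 < \<mu>" and mu_le_L: "\<mu> \<le> L"
begin

lemma L_pos: "0 < L"
  using mu_pos mu_le_L by simp

lemma convex:
  assumes "i < n"
  shows "F i x + inner (G i x) (y - x) \<le> F i y"
proof -
  have "0 \<le> \<mu> / 2 * (norm (y - x))\<^sup>2" using mu_pos by simp
  then show ?thesis using strongly_convex[OF assms, of x y] by linarith
qed

lemma bregman_avg_ge: "\<mu> / 2 * (norm (y - x))\<^sup>2 \<le> bregman_avg n F G x y"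
proof -
  have "\<mu> / 2 * (norm (y - x))\<^sup>2 \<le> F i y - F i x - inner (G i x) (y - x)" if "i < n" for i
    using strongly_convex[OF that, of x y] by simp
  then have "(\<Sum>i<n. \<mu> / 2 * (norm (y - x))\<^sup>2) \<le> (\<Sum>i<n. F i y - F i x - inner (G i x) (y - x))"
    by (intro sum_mono) simp
  then show ?thesis using n_pos by (simp add: bregman_avg_eq_sum field_simps)
qed

lemma bregman_avg_nonneg: "0 \<le> bregman_avg n F G x y"
proof -
  have "0 \<le> \<mu> / 2 * (norm (y - x))\<^sup>2" using mu_pos by simp
  then show ?thesis using bregman_avg_ge[of y x] by linarith
qed

lemma step_sq_le_bregman_avg:
  assumes a: "0 < a" and aL: "a * L\<^sup>2 \<le> \<mu>"
  shows "a\<^sup>2 * L\<^sup>2 * (norm (y - x))\<^sup>2 \<le> 2 * a * bregman_avg n F G x y"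
proof -
  have "a\<^sup>2 * L\<^sup>2 * (norm (y - x))\<^sup>2 \<le> a * \<mu> * (norm (y - x))\<^sup>2"
    using mult_right_mono[OF mult_left_mono[OF aL, of a] zero_le_power2[of "norm (y - x)"]] a
    by (simp add: power2_eq_square mult_ac)
  also have "\<dots> \<le> 2 * a * bregman_avg n F G x y"
    using bregman_avg_ge[of y x] a by (simp add: mult_left_mono)
  finally show ?thesis .
qed

lemma inner_avg_grad_diff_ge:
  fixes x :: "nat \<Rightarrow> 'a"
  defines "xb \<equiv> avg n x"
  shows "bregman_avg n F G xs xb - bregman_avg n F G xs y - L * cons_err n x / real n
            + \<mu> / 2 * (norm (xb - y))\<^sup>2
         \<le> inner (avg n (\<lambda>i. G i (x i)) - avg n (\<lambda>i. G i xs)) (xb - y)"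
proof -
  have per_agent: "F i xb - F i y - inner (G i xs) (xb - y) - L * (norm (x i - xb))\<^sup>2
        + \<mu> / 2 * (norm (y - x i))\<^sup>2 \<le> inner (G i (x i) - G i xs) (xb - y)" if i: "i < n" for i
  proof -
    have "F i (x i) + inner (G i (x i)) (y - x i) + \<mu> / 2 * (norm (y - x i))\<^sup>2 \<le> F i y"
      and "F i xb + inner (G i xb) (x i - xb) \<le> F i (x i)"
      using strongly_convex[OF i] convex[OF i] by blast+
    moreover have "- (L * (norm (x i - xb))\<^sup>2) \<le> inner (G i xb - G i (x i)) (x i - xb)"
      using abs_inner_diff_le_lipschitz[OF lipschitz[OF i, of "x i" xb]]
      by (simp add: inner_commute inner_diff_left inner_diff_right)
    ultimately show ?thesis by (simp add: inner_diff_left inner_diff_right)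
  qed
  have "(\<Sum>i<n. F i xb - F i y - inner (G i xs) (xb - y)) - L * cons_err n x
        + \<mu> / 2 * (real n * (norm (xb - y))\<^sup>2)
      \<le> (\<Sum>i<n. F i xb - F i y - inner (G i xs) (xb - y) - L * (norm (x i - xb))\<^sup>2
          + \<mu> / 2 * (norm (y - x i))\<^sup>2)"
  proof -
    have "real n * (norm (xb - y))\<^sup>2 \<le> (\<Sum>i<n. (norm (y - x i))\<^sup>2)"
      using sum_power2_norm_diff_eq[OF n_pos, of x y] cons_err_nonneg[of n x]
      by (simp add: xb_def norm_minus_commute)
    then have "\<mu> / 2 * (real n * (norm (xb - y))\<^sup>2) \<le> \<mu> / 2 * (\<Sum>i<n. (norm (y - x i))\<^sup>2)"
      using mu_pos by (intro mult_left_mono) simp_all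
    then show ?thesis
      by (simp add: sum.distrib sum_subtractf sum_distrib_left cons_err_def xb_def)
  qed
  also have "\<dots> \<le> (\<Sum>i<n. inner (G i (x i) - G i xs) (xb - y))"
    by (intro sum_mono per_agent) simp
  also have "\<dots> = real n * inner (avg n (\<lambda>i. G i (x i)) - avg n (\<lambda>i. G i xs)) (xb - y)"
    by (simp add: inner_sum_left[symmetric] sum_eq_real_scaleR_avg[OF n_pos] avg_diff[symmetric])
  finally show ?thesis using n_pos
    by (simp add: bregman_avg_diff field_simps)
qed

lemma power2_norm_avg_grad_diff_le:
  "(norm (avg n (\<lambda>i. G i (x i)) - avg n (\<lambda>i. G i xs)))\<^sup>2
     \<le> L\<^sup>2 * (cons_err n x / real n + (norm (avg n x - xs))\<^sup>2)"
proof -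
  have "(norm (avg n (\<lambda>i. G i (x i)) - avg n (\<lambda>i. G i xs)))\<^sup>2
      \<le> (\<Sum>i<n. (norm (G i (x i) - G i xs))\<^sup>2) / real n"
    unfolding avg_diff[symmetric] by (rule power2_norm_avg_le[OF n_pos])
  also have "\<dots> \<le> (\<Sum>i<n. L\<^sup>2 * (norm (x i - xs))\<^sup>2) / real n"
    using lipschitz L_pos
    by (intro divide_right_mono sum_mono)
       (simp_all add: power_mult_distrib[symmetric] power_mono)
  also have "\<dots> = L\<^sup>2 * (cons_err n x / real n + (norm (avg n x - xs))\<^sup>2)"
    using n_pos by (simp add: sum_distrib_left[symmetric] sum_power2_norm_diff_eq field_simps)
  finally show ?thesis .
qed

lemma avg_step_dist_le:
  fixes x :: "nat \<Rightarrow> 'a"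
  assumes W_sym: "\<forall>i<n. \<forall>j<n. W i j = W j i"
    and W_stoch: "\<forall>i<n. (\<Sum>j<n. W i j) = 1"
    and a: "0 < a" and aL: "a * L\<^sup>2 \<le> \<mu>"
  shows "(norm (avg n (\<lambda>i. \<Sum>j<n. W i j *\<^sub>R (x j - a *\<^sub>R G j (x j)))
              - (y - a *\<^sub>R avg n (\<lambda>i. G i xs))))\<^sup>2
       \<le> (1 - a * \<mu>) * (norm (avg n x - y))\<^sup>2 + 2 * a * bregman_avg n F G xs y
         + (2 * a * L + a\<^sup>2 * L\<^sup>2) / real n * cons_err n x"
proof -
  define xb where "xb = avg n x"
  define ub where "ub = avg n (\<lambda>i. G i (x i))"
  define vb where "vb = avg n (\<lambda>i. G i xs)"
  define En where "En = cons_err n x / real n"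
  have "avg n (\<lambda>i. \<Sum>j<n. W i j *\<^sub>R (x j - a *\<^sub>R G j (x j))) - (y - a *\<^sub>R vb)
      = (xb - y) - a *\<^sub>R (ub - vb)"
    unfolding avg_mix[OF W_sym W_stoch] avg_diff avg_scaleR xb_def ub_def
    by (simp add: algebra_simps)
  note step_eq = this
  have expand: "(norm (avg n (\<lambda>i. \<Sum>j<n. W i j *\<^sub>R (x j - a *\<^sub>R G j (x j))) - (y - a *\<^sub>R vb)))\<^sup>2
      = (norm (xb - y))\<^sup>2 - 2 * a * inner (ub - vb) (xb - y) + a\<^sup>2 * (norm (ub - vb))\<^sup>2"
    unfolding step_eq by (simp add: power2_norm_diff inner_commute power_mult_distrib)
  have "2 * a * (bregman_avg n F G xs xb - bregman_avg n F G xs y - L * En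
        + \<mu> / 2 * (norm (xb - y))\<^sup>2) \<le> 2 * a * inner (ub - vb) (xb - y)"
    using inner_avg_grad_diff_ge[where x=x and xs=xs and y=y] a unfolding xb_def ub_def vb_def En_def
    by (intro mult_left_mono) simp_all
  then have inner_ge: "2 * a * bregman_avg n F G xs xb - 2 * a * bregman_avg n F G xs y - 2 * a * L * En
        + a * \<mu> * (norm (xb - y))\<^sup>2 \<le> 2 * a * inner (ub - vb) (xb - y)"
    by (simp add: algebra_simps)
  have "a\<^sup>2 * (norm (ub - vb))\<^sup>2 \<le> a\<^sup>2 * (L\<^sup>2 * (En + (norm (xb - xs))\<^sup>2))"
    using power2_norm_avg_grad_diff_le[where x=x and xs=xs] unfolding xb_def ub_def vb_def En_def
    by (intro mult_left_mono) simp_all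
  then have grad_le: "a\<^sup>2 * (norm (ub - vb))\<^sup>2 \<le> a\<^sup>2 * L\<^sup>2 * En + a\<^sup>2 * L\<^sup>2 * (norm (xb - xs))\<^sup>2"
    by (simp add: algebra_simps)
  have "(2 * a * L + a\<^sup>2 * L\<^sup>2) / real n * cons_err n x = 2 * a * L * En + a\<^sup>2 * L\<^sup>2 * En"
    unfolding En_def by (simp add: add_divide_distrib algebra_simps)
  moreover have "(1 - a * \<mu>) * (norm (xb - y))\<^sup>2 = (norm (xb - y))\<^sup>2 - a * \<mu> * (norm (xb - y))\<^sup>2"
    by (simp add: algebra_simps)
  ultimately show ?thesis
    unfolding xb_def[symmetric] vb_def[symmetric] expand
    using inner_ge grad_le step_sq_le_bregman_avg[OF a aL, of xb xs] by linarith
qed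

lemma sum_power2_norm_grad_le:
  fixes x :: "nat \<Rightarrow> 'a"
  shows "(\<Sum>j<n. (norm (G j (x j)))\<^sup>2)
     \<le> 3 * L\<^sup>2 * (cons_err n x + real n * (norm (avg n x - y))\<^sup>2)
       + 12 * L * real n * bregman_avg n F G xs y + 3 * (\<Sum>j<n. (norm (G j xs))\<^sup>2)"
proof -
  have "(norm (G j (x j)))\<^sup>2
      \<le> 3 * (L\<^sup>2 * (norm (x j - y))\<^sup>2) + 3 * (norm (G j y - G j xs))\<^sup>2 + 3 * (norm (G j xs))\<^sup>2"
    if j: "j < n" for j
  proof -
    have "(norm (G j (x j) - G j y))\<^sup>2 \<le> L\<^sup>2 * (norm (x j - y))\<^sup>2"
      using lipschitz[OF j, of "x j" y] L_pos by (simp add: power_mult_distrib[symmetric] power_mono)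
    then show ?thesis
      using power2_norm_add3_le[of "G j (x j) - G j y" "G j y - G j xs" "G j xs"] by simp
  qed
  moreover have "(norm (G j y - G j xs))\<^sup>2 \<le> 4 * L * (F j y - F j xs - inner (G j xs) (y - xs))"
    if "j < n" for j
    using norm_grad_diff_sq_le_bregman[OF convex lipschitz L_pos] that by blast
  ultimately have "(\<Sum>j<n. (norm (G j (x j)))\<^sup>2) \<le> (\<Sum>j<n. 3 * (L\<^sup>2 * (norm (x j - y))\<^sup>2)
      + 12 * L * (F j y - F j xs - inner (G j xs) (y - xs)) + 3 * (norm (G j xs))\<^sup>2)"
    by (intro sum_mono) force
  also have "\<dots> = 3 * L\<^sup>2 * (cons_err n x + real n * (norm (avg n x - y))\<^sup>2)
       + 12 * L * real n * bregman_avg n F G xs y + 3 * (\<Sum>j<n. (norm (G j xs))\<^sup>2)"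
    using n_pos
    by (simp add: sum.distrib sum_distrib_left[symmetric] sum_power2_norm_diff_eq bregman_avg_eq_sum)
  finally show ?thesis .
qed

lemma cons_err_step_le:
  fixes x :: "nat \<Rightarrow> 'a"
  assumes W_sym: "\<forall>i<n. \<forall>j<n. W i j = W j i"
    and W_stoch: "\<forall>i<n. (\<Sum>j<n. W i j) = 1"
    and rho: "(rho_w n W)\<^sup>2 < 1"
  shows "cons_err n (\<lambda>i. \<Sum>j<n. W i j *\<^sub>R (x j - a *\<^sub>R G j (x j)))
       \<le> (1 + (rho_w n W)\<^sup>2) / 2 * cons_err n x
         + 2 * (rho_w n W)\<^sup>2 / (1 - (rho_w n W)\<^sup>2) * a\<^sup>2 *
           (3 * L\<^sup>2 * (cons_err n x + real n * (norm (avg n x - y))\<^sup>2)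
            + 12 * L * real n * bregman_avg n F G xs y + 3 * (\<Sum>j<n. (norm (G j xs))\<^sup>2))"
proof -
  define \<rho> where "\<rho> = rho_w n W"
  define u where "u j = G j (x j)" for j
  define z where "z j = x j - a *\<^sub>R u j" for j
  have \<beta>: "0 \<le> 2 * \<rho>\<^sup>2 / (1 - \<rho>\<^sup>2)" using rho unfolding \<rho>_def by simp
  have "cons_err n (\<lambda>i. \<Sum>j<n. W i j *\<^sub>R z j) \<le> \<rho>\<^sup>2 * cons_err n z"
    unfolding \<rho>_def by (rule cons_err_mix_le[OF n_pos W_sym W_stoch])
  also have "\<dots> = (\<Sum>j<n. \<rho>\<^sup>2 * (norm ((x j - avg n x) - a *\<^sub>R (u j - avg n u)))\<^sup>2)"
    unfolding cons_err_def z_def avg_diff avg_scaleR sum_distrib_left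
    by (simp add: algebra_simps)
  also have "\<dots> \<le> (\<Sum>j<n. (1 + \<rho>\<^sup>2) / 2 * (norm (x j - avg n x))\<^sup>2
                          + 2 * \<rho>\<^sup>2 / (1 - \<rho>\<^sup>2) * (norm (a *\<^sub>R (u j - avg n u)))\<^sup>2)"
    using rho unfolding \<rho>_def by (intro sum_mono rho_sq_norm_diff_sq_le)
  also have "\<dots> = (1 + \<rho>\<^sup>2) / 2 * cons_err n x + 2 * \<rho>\<^sup>2 / (1 - \<rho>\<^sup>2) * (a\<^sup>2 * cons_err n u)"
    unfolding cons_err_def by (simp add: sum.distrib sum_distrib_left power_mult_distrib)
  also have "\<dots> \<le> (1 + \<rho>\<^sup>2) / 2 * cons_err n x + 2 * \<rho>\<^sup>2 / (1 - \<rho>\<^sup>2) * (a\<^sup>2 *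
        (3 * L\<^sup>2 * (cons_err n x + real n * (norm (avg n x - y))\<^sup>2)
         + 12 * L * real n * bregman_avg n F G xs y + 3 * (\<Sum>j<n. (norm (G j xs))\<^sup>2)))"
    using order_trans[OF cons_err_le_sum_power2_norm[OF n_pos] sum_power2_norm_grad_le] \<beta>
    unfolding u_def by (intro add_left_mono mult_left_mono) simp_all
  finally show ?thesis unfolding z_def u_def \<rho>_def by (simp add: mult.assoc)
qed

lemma lyapunov_step:
  fixes x :: "nat \<Rightarrow> 'a"
  assumes W_sym: "\<forall>i<n. \<forall>j<n. W i j = W j i"
    and W_stoch: "\<forall>i<n. (\<Sum>j<n. W i j) = 1"
    and a: "0 < a" and SC: "cond_SC (rho_w n W) \<mu> L a"
  defines "x' \<equiv> (\<lambda>i. \<Sum>j<n. W i j *\<^sub>R (x j - a *\<^sub>R G j (x j)))"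
  shows "(norm (avg n x' - (y - a *\<^sub>R avg n (\<lambda>i. G i xs))))\<^sup>2 + omega n L \<mu> (rho_w n W) a * cons_err n x'
     \<le> (1 - a * \<mu> / 4) * ((norm (avg n x - y))\<^sup>2 + omega n L \<mu> (rho_w n W) a * cons_err n x)
        + 2 * (a * (1 + 240 * a\<^sup>2 * (rho_w n W)\<^sup>2 * L ^ 3 / (\<mu> * (1 - (rho_w n W)\<^sup>2)\<^sup>2))
                 * bregman_avg n F G xs y
               + 120 * a ^ 3 * (rho_w n W)\<^sup>2 * L\<^sup>2 / (\<mu> * (1 - (rho_w n W)\<^sup>2)\<^sup>2)
                 * ((\<Sum>i<n. (norm (G i xs))\<^sup>2) / real n))"
proof -
  note SC' = cond_SC_consequences[OF a mu_pos mu_le_L SC]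
  have dist: "(norm (avg n x' - (y - a *\<^sub>R avg n (\<lambda>i. G i xs))))\<^sup>2
      \<le> (1 - a * \<mu>) * (norm (avg n x - y))\<^sup>2 + 2 * a * bregman_avg n F G xs y
        + (2 * a * L + a\<^sup>2 * L\<^sup>2) / real n * cons_err n x"
    unfolding x'_def by (rule avg_step_dist_le[OF W_sym W_stoch a SC'(5)])
  have cons: "cons_err n x' \<le> (1 + (rho_w n W)\<^sup>2) / 2 * cons_err n x
      + 2 * (rho_w n W)\<^sup>2 / (1 - (rho_w n W)\<^sup>2) * a\<^sup>2 *
        (3 * L\<^sup>2 * (cons_err n x + real n * (norm (avg n x - y))\<^sup>2)
         + 12 * L * real n * bregman_avg n F G xs y + 3 * (\<Sum>j<n. (norm (G j xs))\<^sup>2))"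
    unfolding x'_def by (rule cons_err_step_le[OF W_sym W_stoch SC'(1)])
  have "0 \<le> (\<Sum>i<n. (norm (G i xs))\<^sup>2)" by (simp add: sum_nonneg)
  with lyapunov_combination[OF n_pos a mu_pos mu_le_L SC zero_le_power2 cons_err_nonneg
        bregman_avg_nonneg _ dist cons]
  show ?thesis by simp
qed

end

section \<open>Averaging over random permutations\<close>

lemma perm_space_permutes: "\<sigma> \<in> perm_space n m t \<Longrightarrow> i < n \<Longrightarrow> \<sigma> t i permutes {..<m}"
  unfolding perm_space_def perm_set_def by (auto simp: PiE_iff)

lemma finite_perm_space: "finite (perm_space n m t)"
  unfolding perm_space_def perm_set_def by (intro finite_PiE) (auto intro: finite_permutations)

lemma card_perm_space_pos: "0 < card (perm_space n m t)"
proof -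
  have "(\<lambda>s\<in>{..t}. \<lambda>i\<in>{..<n}. id) \<in> perm_space n m t"
    unfolding perm_space_def perm_set_def by (auto simp: PiE_iff permutes_id)
  then show ?thesis using finite_perm_space by (auto simp: card_gt_0_iff)
qed

lemma Exp_mono: "(\<And>\<sigma>. \<sigma> \<in> perm_space n m t \<Longrightarrow> X \<sigma> \<le> Y \<sigma>) \<Longrightarrow> Exp n m t X \<le> Exp n m t Y"
  unfolding Exp_def by (intro divide_right_mono sum_mono) auto

lemma Exp_cong: "(\<And>\<sigma>. \<sigma> \<in> perm_space n m t \<Longrightarrow> X \<sigma> = Y \<sigma>) \<Longrightarrow> Exp n m t X = Exp n m t Y"
  unfolding Exp_def by (metis (mono_tags, lifting) sum.cong)

lemma Exp_add: "Exp n m t (\<lambda>\<sigma>. X \<sigma> + Y \<sigma>) = Exp n m t X + Exp n m t Y"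
  unfolding Exp_def by (simp add: sum.distrib add_divide_distrib)

lemma Exp_mult: "Exp n m t (\<lambda>\<sigma>. c * X \<sigma>) = c * Exp n m t X"
  unfolding Exp_def by (simp add: sum_distrib_left[symmetric])

lemma Exp_sum: "Exp n m t (\<lambda>\<sigma>. \<Sum>i\<in>I. X i \<sigma>) = (\<Sum>i\<in>I. Exp n m t (X i))"
  unfolding Exp_def by (subst sum.swap) (simp add: sum_divide_distrib)

lemma perm_space_update_compose:
  assumes \<tau>: "\<tau> permutes {..<m}" and \<sigma>: "\<sigma> \<in> perm_space n m t" and i: "i < n"
  shows "\<sigma>(t := (\<sigma> t)(i := \<tau> \<circ> \<sigma> t i)) \<in> perm_space n m t"
proof -
  have \<sigma>_PiE: "\<sigma> \<in> PiE {..t} (\<lambda>_. PiE {..<n} (\<lambda>_. perm_set m))" using \<sigma> unfolding perm_space_def .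
  have "\<tau> \<circ> \<sigma> t i \<in> perm_set m"
    unfolding perm_set_def using permutes_compose[OF perm_space_permutes[OF \<sigma> i] \<tau>] by blast
  from PiE_fun_upd[where x=i, OF this PiE_mem[OF \<sigma>_PiE, of t]]
  have "(\<sigma> t)(i := \<tau> \<circ> \<sigma> t i) \<in> PiE {..<n} (\<lambda>_. perm_set m)"
    using i by (simp add: insert_absorb)
  from PiE_fun_upd[where x=t, OF this \<sigma>_PiE] show ?thesis
    unfolding perm_space_def by (simp add: insert_absorb)
qed

text \<open>Composing agent \<open>i\<close>'s permutation in epoch \<open>t\<close> with the transposition of \<open>k\<close> and \<open>k'\<close>
  is an involution of the permutation space mapping \<open>{\<sigma>. \<sigma> t i l = k}\<close> into \<open>{\<sigma>. \<sigma> t i l = k'}\<close>.\<close>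
lemma card_perm_fiber_le:
  assumes i: "i < n" and k: "k < m" and k': "k' < m"
  shows "card {\<sigma> \<in> perm_space n m t. \<sigma> t i l = k} \<le> card {\<sigma> \<in> perm_space n m t. \<sigma> t i l = k'}"
proof -
  define \<tau> where "\<tau> = Transposition.transpose k k'"
  define \<phi> where "\<phi> \<sigma> = \<sigma>(t := (\<sigma> t)(i := \<tau> \<circ> \<sigma> t i))" for \<sigma> :: "nat \<Rightarrow> nat \<Rightarrow> nat \<Rightarrow> nat"
  have involution: "\<phi> (\<phi> \<sigma>) = \<sigma>" for \<sigma>
  proof -
    have "\<tau> \<circ> (\<tau> \<circ> \<sigma> t i) = \<sigma> t i" unfolding \<tau>_def by (simp add: comp_assoc[symmetric])
    then show ?thesis unfolding \<phi>_def by simp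
  qed
  have "\<tau> permutes {..<m}" unfolding \<tau>_def using k k' by (intro permutes_swap_id) auto
  then have closed: "\<phi> \<sigma> \<in> perm_space n m t" if "\<sigma> \<in> perm_space n m t" for \<sigma>
    unfolding \<phi>_def using that i by (rule perm_space_update_compose)
  have "inj_on \<phi> {\<sigma> \<in> perm_space n m t. \<sigma> t i l = k}"
  proof (rule inj_onI)
    fix \<sigma>1 \<sigma>2 assume "\<phi> \<sigma>1 = \<phi> \<sigma>2"
    then have "\<phi> (\<phi> \<sigma>1) = \<phi> (\<phi> \<sigma>2)" by simp
    then show "\<sigma>1 = \<sigma>2" by (simp only: involution)
  qed
  moreover have "\<phi> ` {\<sigma> \<in> perm_space n m t. \<sigma> t i l = k} \<subseteq> {\<sigma> \<in> perm_space n m t. \<sigma> t i l = k'}"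
  proof
    fix \<sigma>' assume "\<sigma>' \<in> \<phi> ` {\<sigma> \<in> perm_space n m t. \<sigma> t i l = k}"
    then obtain \<sigma> where \<sigma>: "\<sigma> \<in> perm_space n m t" "\<sigma> t i l = k" and \<sigma>': "\<sigma>' = \<phi> \<sigma>" by blast
    have "\<phi> \<sigma> t i l = k'" unfolding \<phi>_def \<tau>_def using \<sigma>(2) by simp
    then show "\<sigma>' \<in> {\<sigma> \<in> perm_space n m t. \<sigma> t i l = k'}" using closed[OF \<sigma>(1)] \<sigma>' by simp
  qed
  ultimately show ?thesis
    by (rule card_inj_on_le) (simp add: finite_perm_space)
qed

lemma Exp_perm_entry:
  assumes i: "i < n" and l: "l < m"
  shows "Exp n m t (\<lambda>\<sigma>. h (\<sigma> t i l)) = (\<Sum>k<m. h k) / real m"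
proof -
  let ?PS = "perm_space n m t"
  define fib where "fib k = {\<sigma> \<in> ?PS. \<sigma> t i l = k}" for k
  have img: "(\<lambda>\<sigma>. \<sigma> t i l) ` ?PS \<subseteq> {..<m}"
    using perm_space_permutes[OF _ i] l by (auto dest: permutes_in_image)
  have card_fib: "card (fib k) = card (fib 0)" if "k \<in> {..<m}" for k
  proof -
    have "card (fib k) \<le> card (fib 0)" and "card (fib 0) \<le> card (fib k)"
      using that l unfolding fib_def by (auto intro!: card_perm_fiber_le[OF i])
    then show ?thesis by simp
  qed
  have "(\<Sum>\<sigma>\<in>?PS. h (\<sigma> t i l)) = (\<Sum>k<m. \<Sum>\<sigma>\<in>fib k. h (\<sigma> t i l))"
    unfolding fib_def by (rule sum.group[OF finite_perm_space finite_lessThan img, symmetric])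
  also have "\<dots> = (\<Sum>k<m. real (card (fib 0)) * h k)"
  proof (rule sum.cong[OF refl])
    fix k assume k: "k \<in> {..<m}"
    have "(\<Sum>\<sigma>\<in>fib k. h (\<sigma> t i l)) = (\<Sum>\<sigma>\<in>fib k. h k)" by (rule sum.cong) (simp_all add: fib_def)
    then show "(\<Sum>\<sigma>\<in>fib k. h (\<sigma> t i l)) = real (card (fib 0)) * h k" using card_fib[OF k] by simp
  qed
  finally have sum_eq: "(\<Sum>\<sigma>\<in>?PS. h (\<sigma> t i l)) = real (card (fib 0)) * (\<Sum>k<m. h k)"
    by (simp add: sum_distrib_left)
  have "real (card ?PS) = (\<Sum>k<m. \<Sum>\<sigma>\<in>fib k. (1::real))"
    unfolding fib_def using sum.group[OF finite_perm_space finite_lessThan img, of "\<lambda>_. 1::real"] by simp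
  also have "\<dots> = (\<Sum>k<m. real (card (fib 0)))"
  proof (rule sum.cong[OF refl])
    fix k assume "k \<in> {..<m}"
    then show "(\<Sum>\<sigma>\<in>fib k. (1::real)) = real (card (fib 0))" using card_fib[of k] by simp
  qed
  also have "\<dots> = real m * real (card (fib 0))" by simp
  finally have card_eq: "real (card ?PS) = real m * real (card (fib 0))" .
  moreover have "real (card ?PS) \<noteq> 0" using card_perm_space_pos[of n m t] by simp
  ultimately have "real (card (fib 0)) \<noteq> 0" by auto
  then show ?thesis unfolding Exp_def sum_eq card_eq by simp
qed

section \<open>An epoch of D-RR\<close>

lemma geometric_unroll:
  fixes h :: "nat \<Rightarrow> real"
  assumes q: "0 \<le> q" and step: "\<And>l. l < m \<Longrightarrow> h (Suc l) \<le> q * h l + c"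
  shows "l \<le> m \<Longrightarrow> h l \<le> q ^ l * h 0 + c * (\<Sum>k<l. q ^ k)"
proof (induction l)
  case (Suc l)
  then have l: "l < m" by simp
  have "h (Suc l) \<le> q * h l + c" by (rule step[OF l])
  also have "\<dots> \<le> q * (q ^ l * h 0 + c * (\<Sum>k<l. q ^ k)) + c"
    using Suc.IH l q by (simp add: mult_left_mono)
  also have "\<dots> = q ^ Suc l * h 0 + c * (1 + q * (\<Sum>k<l. q ^ k))"
    by (simp add: algebra_simps)
  also have "1 + q * (\<Sum>k<l. q ^ k) = (\<Sum>k<Suc l. q ^ k)"
    by (simp only: sum.lessThan_Suc_shift power_0 power_Suc sum_distrib_left)
  finally show ?case .
qed simp

locale drr_setting =
  fixes n m :: nat and W :: "nat \<Rightarrow> nat \<Rightarrow> real"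
    and f :: "nat \<Rightarrow> nat \<Rightarrow> 'a::euclidean_space \<Rightarrow> real" and g :: "nat \<Rightarrow> nat \<Rightarrow> 'a \<Rightarrow> 'a"
    and \<mu> L :: real and xs :: 'a and x0 :: "nat \<Rightarrow> 'a" and \<alpha> :: "nat \<Rightarrow> real"
  assumes n_pos: "n \<ge> 1" and m_pos: "m \<ge> 1"
    and W_sym: "\<forall>i<n. \<forall>j<n. W i j = W j i"
    and W_stoch: "\<forall>i<n. (\<Sum>j<n. W i j) = 1"
    and grad: "\<forall>i<n. \<forall>l<m. \<forall>x. (f i l has_derivative (\<lambda>h. g i l x \<bullet> h)) (at x)"
    and strongly_convex: "\<forall>i<n. \<forall>l<m. \<forall>x y.
          f i l y \<ge> f i l x + g i l x \<bullet> (y - x) + \<mu> / 2 * (norm (y - x))\<^sup>2"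
    and lipschitz: "\<forall>i<n. \<forall>l<m. \<forall>x y. norm (g i l x - g i l y) \<le> L * norm (x - y)"
    and mu_pos: "0 < \<mu>" and mu_le_L: "\<mu> \<le> L"
    and xs_min: "\<forall>y. (1 / real n) * (\<Sum>i<n. (1 / real m) * (\<Sum>l<m. f i l xs))
                   \<le> (1 / real n) * (\<Sum>i<n. (1 / real m) * (\<Sum>l<m. f i l y))"
    and step: "\<forall>t. 0 < \<alpha> t \<and> cond_SC (rho_w n W) \<mu> L (\<alpha> t)"
begin

lemma sum_grad_at_min: "(\<Sum>i<n. \<Sum>l<m. g i l xs) = 0"
proof -
  define \<Phi> where "\<Phi> y = (1 / real n) * (\<Sum>i<n. (1 / real m) * (\<Sum>l<m. f i l y))" for y
  define G where "G = (\<Sum>i<n. \<Sum>l<m. g i l xs)"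
  have "(\<Phi> has_derivative (\<lambda>h. (1 / real n) * (\<Sum>i<n. (1 / real m) * (\<Sum>l<m. g i l xs \<bullet> h)))) (at xs)"
    unfolding \<Phi>_def using grad by (intro derivative_intros) auto
  moreover have "\<forall>y\<in>UNIV. \<Phi> xs \<le> \<Phi> y" using xs_min unfolding \<Phi>_def by simp
  ultimately have "(\<lambda>h. (1 / real n) * (\<Sum>i<n. (1 / real m) * (\<Sum>l<m. g i l xs \<bullet> h))) = (\<lambda>h. 0)"
    by (intro differential_zero_maxmin[of xs UNIV]) auto
  then have "(1 / real n) * (\<Sum>i<n. (1 / real m) * (\<Sum>l<m. g i l xs \<bullet> G)) = 0"
    by (metis (no_types))
  moreover have "(\<Sum>i<n. (1 / real m) * (\<Sum>l<m. g i l xs \<bullet> G)) = (1 / real m) * (G \<bullet> G)"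
    by (simp add: G_def inner_sum_left sum_distrib_left)
  ultimately have "G \<bullet> G = 0" using n_pos m_pos by simp
  then show ?thesis unfolding G_def by simp
qed

lemma xstar_bar_epoch_end:
  assumes \<sigma>: "\<sigma> \<in> perm_space n m t"
  shows "xstar_bar n g a (\<sigma> t) xs m = xs"
proof -
  have "(\<Sum>k<m. g i (\<sigma> t i k) xs) = (\<Sum>l<m. g i l xs)" if "i < n" for i
    using sum.permute[OF perm_space_permutes[OF \<sigma> that], of "\<lambda>l. g i l xs"] by (simp add: comp_def)
  then have "(\<Sum>i<n. \<Sum>k<m. g i (\<sigma> t i k) xs) = 0"
    using sum_grad_at_min by simp
  then show ?thesis
    unfolding xstar_bar_def by (simp add: scaleR_sum_right[symmetric] sum.swap[of _ "{..<m}"])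
qed

lemma strongly_convex_family_at:
  assumes "\<forall>i<n. \<pi> i < m"
  shows "strongly_convex_family n (\<lambda>i. f i (\<pi> i)) (\<lambda>i. g i (\<pi> i)) \<mu> L"
  using assms n_pos strongly_convex lipschitz mu_pos mu_le_L by unfold_locales auto

definition lyap :: "nat \<Rightarrow> nat \<Rightarrow> (nat \<Rightarrow> nat \<Rightarrow> nat \<Rightarrow> nat) \<Rightarrow> real" where
  "lyap t l \<sigma> = (norm (avg n (drr_x n m W g \<alpha> x0 \<sigma> t l) - xstar_bar n g (\<alpha> t) (\<sigma> t) xs l))\<^sup>2
     + omega n L \<mu> (rho_w n W) (\<alpha> t) * cons_err n (drr_x n m W g \<alpha> x0 \<sigma> t l)"

definition shuffle_weight :: "nat \<Rightarrow> real" where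
  "shuffle_weight t = \<alpha> t * (1 + 240 * (\<alpha> t)\<^sup>2 * (rho_w n W)\<^sup>2 * L ^ 3 / (\<mu> * (1 - (rho_w n W)\<^sup>2)\<^sup>2))"

definition star_weight :: "nat \<Rightarrow> real" where
  "star_weight t = 120 * \<alpha> t ^ 3 * (rho_w n W)\<^sup>2 * L\<^sup>2 / (\<mu> * (1 - (rho_w n W)\<^sup>2)\<^sup>2)"

definition noise :: "nat \<Rightarrow> real" where
  "noise t = \<alpha> t * sigma_shuffle_sq n m f g (\<alpha> t) xs t
      * (1 + 240 * (\<alpha> t)\<^sup>2 * (rho_w n W)\<^sup>2 * L ^ 3 / (\<mu> * (1 - (rho_w n W)\<^sup>2)\<^sup>2))
    + 120 * \<alpha> t ^ 3 * (rho_w n W)\<^sup>2 * L\<^sup>2 / (\<mu> * (1 - (rho_w n W)\<^sup>2)\<^sup>2) * sigma_star_sq n m g xs"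

lemma noise_eq:
  "noise t = shuffle_weight t * sigma_shuffle_sq n m f g (\<alpha> t) xs t + star_weight t * sigma_star_sq n m g xs"
  unfolding noise_def shuffle_weight_def star_weight_def by (simp only: mult_ac)

lemma drr_H_eq_Exp_lyap: "drr_H n m W g \<alpha> x0 xs L \<mu> t l = Exp n m t (lyap t l)"
  unfolding drr_H_def lyap_def Exp_add Exp_mult ..

lemma drr_Htilde_eq_Exp_lyap: "drr_Htilde n m W g \<alpha> x0 xs L \<mu> t = Exp n m t (lyap t m)"
  unfolding drr_Htilde_def lyap_def Exp_add Exp_mult
  by (intro arg_cong2[where f="(+)"] arg_cong2[where f="(*)"] refl Exp_cong)
     (simp_all add: drr_x_def xstar_bar_epoch_end)

lemma lyap_Suc_le:
  assumes \<sigma>: "\<sigma> \<in> perm_space n m t" and l: "l < m"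
  shows "lyap t (Suc l) \<sigma> \<le> (1 - \<alpha> t * \<mu> / 4) * lyap t l \<sigma>
    + 2 * (shuffle_weight t
             * bregman_avg n (\<lambda>i. f i (\<sigma> t i l)) (\<lambda>i. g i (\<sigma> t i l)) xs (xstar_bar n g (\<alpha> t) (\<sigma> t) xs l)
           + star_weight t * ((\<Sum>i<n. (norm (g i (\<sigma> t i l) xs))\<^sup>2) / real n))"
proof -
  have "\<forall>i<n. \<sigma> t i l < m"
    using permutes_in_image[OF perm_space_permutes[OF \<sigma>]] l by simp
  then interpret agents: strongly_convex_family n "\<lambda>i. f i (\<sigma> t i l)" "\<lambda>i. g i (\<sigma> t i l)" \<mu> L
    by (rule strongly_convex_family_at)
  have a: "0 < \<alpha> t" and SC: "cond_SC (rho_w n W) \<mu> L (\<alpha> t)" using step by auto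
  have x_Suc: "drr_x n m W g \<alpha> x0 \<sigma> t (Suc l) = (\<lambda>i. \<Sum>j<n. W i j *\<^sub>R
      (drr_x n m W g \<alpha> x0 \<sigma> t l j - \<alpha> t *\<^sub>R g j (\<sigma> t j l) (drr_x n m W g \<alpha> x0 \<sigma> t l j)))"
    unfolding drr_x_def by (simp add: drr_step_def)
  have xstar_Suc: "xstar_bar n g (\<alpha> t) (\<sigma> t) xs (Suc l)
      = xstar_bar n g (\<alpha> t) (\<sigma> t) xs l - \<alpha> t *\<^sub>R avg n (\<lambda>i. g i (\<sigma> t i l) xs)"
    unfolding xstar_bar_def avg_def by (simp add: algebra_simps)
  show ?thesis
    unfolding lyap_def x_Suc xstar_Suc shuffle_weight_def star_weight_def
    by (rule agents.lyapunov_step[OF W_sym W_stoch a SC])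
qed

lemma Exp_bregman_le_sigma_shuffle_sq:
  assumes "l < m"
  shows "Exp n m t (\<lambda>\<sigma>. bregman_avg n (\<lambda>i. f i (\<sigma> t i l)) (\<lambda>i. g i (\<sigma> t i l)) xs
      (xstar_bar n g (\<alpha> t) (\<sigma> t) xs l)) \<le> sigma_shuffle_sq n m f g (\<alpha> t) xs t"
  unfolding sigma_shuffle_sq_def bregman_avg_def avg_def Let_def using assms by (intro Max_ge) auto

lemma Exp_grad_sq_eq_sigma_star_sq:
  assumes "l < m"
  shows "Exp n m t (\<lambda>\<sigma>. (\<Sum>i<n. (norm (g i (\<sigma> t i l) xs))\<^sup>2) / real n) = sigma_star_sq n m g xs"
proof -
  have "Exp n m t (\<lambda>\<sigma>. (\<Sum>i<n. (norm (g i (\<sigma> t i l) xs))\<^sup>2) / real n)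
      = (1 / real n) * (\<Sum>i<n. Exp n m t (\<lambda>\<sigma>. (norm (g i (\<sigma> t i l) xs))\<^sup>2))"
    unfolding Exp_sum[symmetric] Exp_mult[symmetric] by simp
  also have "\<dots> = (1 / real n) * (\<Sum>i<n. (\<Sum>k<m. (norm (g i k xs))\<^sup>2) / real m)"
    using Exp_perm_entry[OF _ assms, where h="\<lambda>k. (norm (g _ k xs))\<^sup>2"] by simp
  also have "\<dots> = sigma_star_sq n m g xs"
    unfolding sigma_star_sq_def by (simp add: sum_divide_distrib[symmetric])
  finally show ?thesis .
qed

lemma Exp_lyap_Suc_le:
  assumes l: "l < m"
  shows "Exp n m t (lyap t (Suc l)) \<le> (1 - \<alpha> t * \<mu> / 4) * Exp n m t (lyap t l) + 2 * noise t"
proof -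
  have "0 \<le> shuffle_weight t"
    unfolding shuffle_weight_def using step mu_pos mu_le_L by (simp add: less_imp_le)
  then have "shuffle_weight t * Exp n m t (\<lambda>\<sigma>. bregman_avg n (\<lambda>i. f i (\<sigma> t i l)) (\<lambda>i. g i (\<sigma> t i l)) xs
      (xstar_bar n g (\<alpha> t) (\<sigma> t) xs l)) \<le> shuffle_weight t * sigma_shuffle_sq n m f g (\<alpha> t) xs t"
    by (rule mult_left_mono[OF Exp_bregman_le_sigma_shuffle_sq[OF l]])
  moreover have "Exp n m t (lyap t (Suc l)) \<le> (1 - \<alpha> t * \<mu> / 4) * Exp n m t (lyap t l)
      + 2 * (shuffle_weight t * Exp n m t (\<lambda>\<sigma>. bregman_avg n (\<lambda>i. f i (\<sigma> t i l)) (\<lambda>i. g i (\<sigma> t i l))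
               xs (xstar_bar n g (\<alpha> t) (\<sigma> t) xs l))
             + star_weight t * Exp n m t (\<lambda>\<sigma>. (\<Sum>i<n. (norm (g i (\<sigma> t i l) xs))\<^sup>2) / real n))"
    unfolding Exp_mult[symmetric] Exp_add[symmetric] by (rule Exp_mono) (rule lyap_Suc_le[OF _ l])
  ultimately show ?thesis unfolding Exp_grad_sq_eq_sigma_star_sq[OF l] noise_eq by simp
qed

lemma contraction_factor_nonneg: "0 \<le> 1 - \<alpha> t * \<mu> / 4"
proof -
  have "\<alpha> t * \<mu> \<le> (1 - (rho_w n W)\<^sup>2) / 2"
    using step cond_SC_consequences(2)[OF _ mu_pos mu_le_L] by blast
  moreover have "(1 - (rho_w n W)\<^sup>2) / 2 \<le> 1 / 2" by simp
  ultimately show ?thesis by linarith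
qed

lemma Exp_lyap_le:
  "l \<le> m \<Longrightarrow> Exp n m t (lyap t l)
     \<le> (1 - \<alpha> t * \<mu> / 4) ^ l * Exp n m t (lyap t 0) + 2 * noise t * (\<Sum>k<l. (1 - \<alpha> t * \<mu> / 4) ^ k)"
  by (rule geometric_unroll[where h="\<lambda>l. Exp n m t (lyap t l)",
        OF contraction_factor_nonneg Exp_lyap_Suc_le])

end

theorem lemma8:
  fixes n m :: nat
    and W :: "nat \<Rightarrow> nat \<Rightarrow> real"
    and f :: "nat \<Rightarrow> nat \<Rightarrow> 'a::euclidean_space \<Rightarrow> real"
    and g :: "nat \<Rightarrow> nat \<Rightarrow> 'a \<Rightarrow> 'a"
    and \<mu> L :: real
    and xs :: 'a
    and x0 :: "nat \<Rightarrow> 'a"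
    and \<alpha> :: "nat \<Rightarrow> real"
  assumes n_pos: "n \<ge> 1" and m_pos: "m \<ge> 1"
    and W_nonneg: "\<forall>i<n. \<forall>j<n. W i j \<ge> 0"
    and W_sym: "\<forall>i<n. \<forall>j<n. W i j = W j i"
    and W_stoch: "\<forall>i<n. (\<Sum>j<n. W i j) = 1"
    and W_connected: "\<forall>i<n. \<forall>j<n.
          (i, j) \<in> {(a, b). a < n \<and> b < n \<and> a \<noteq> b \<and> W a b > 0}\<^sup>*"
    and grad: "\<forall>i<n. \<forall>l<m. \<forall>x. (f i l has_derivative (\<lambda>h. g i l x \<bullet> h)) (at x)"
    and strongly_convex: "\<forall>i<n. \<forall>l<m. \<forall>x y.
          f i l y \<ge> f i l x + g i l x \<bullet> (y - x) + \<mu> / 2 * (norm (y - x))\<^sup>2"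
    and lipschitz: "\<forall>i<n. \<forall>l<m. \<forall>x y. norm (g i l x - g i l y) \<le> L * norm (x - y)"
    and mu_pos: "0 < \<mu>" and mu_le_L: "\<mu> \<le> L"
    and xs_min: "\<forall>y. (1 / real n) * (\<Sum>i<n. (1 / real m) * (\<Sum>l<m. f i l xs))
                   \<le> (1 / real n) * (\<Sum>i<n. (1 / real m) * (\<Sum>l<m. f i l y))"
    and step: "\<forall>t. 0 < \<alpha> t \<and> cond_SC (rho_w n W) \<mu> L (\<alpha> t)"
  shows "\<forall>t. let a = \<alpha> t; \<rho> = rho_w n W; q = 1 - a * \<mu> / 4;
              C = a * sigma_shuffle_sq n m f g a xs t
                    * (1 + 240 * a\<^sup>2 * \<rho>\<^sup>2 * L ^ 3 / (\<mu> * (1 - \<rho>\<^sup>2)\<^sup>2))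
                  + 120 * a ^ 3 * \<rho>\<^sup>2 * L\<^sup>2 / (\<mu> * (1 - \<rho>\<^sup>2)\<^sup>2) * sigma_star_sq n m g xs
           in (\<forall>l\<le>m. drr_H n m W g \<alpha> x0 xs L \<mu> t l
                  \<le> q ^ l * drr_H n m W g \<alpha> x0 xs L \<mu> t 0 + 2 * C * (\<Sum>k<l. q ^ k))
            \<and> drr_Htilde n m W g \<alpha> x0 xs L \<mu> t
                  \<le> q ^ m * drr_H n m W g \<alpha> x0 xs L \<mu> t 0 + 2 * C * (\<Sum>k<m. q ^ k)"
proof -
  interpret drr_setting n m W f g \<mu> L xs x0 \<alpha>
    using n_pos m_pos W_sym W_stoch grad strongly_convex lipschitz mu_pos mu_le_L xs_min step
    by unfold_locales auto
  show ?thesis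
    using Exp_lyap_le by (auto simp: Let_def drr_H_eq_Exp_lyap drr_Htilde_eq_Exp_lyap noise_def)
qed

end
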